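(* Let $p\geq1$ and let $u:\mathbb{R}\to\mathbb{R}$ be a function with compact support which is Lipschitz continuous and such that $u\in C^{1}(\mathbb{R}\setminus S)$ for some finite set $S\subseteq\mathbb{R}$. For $\delta>0$ let $S_{\delta}u(x):=\delta\lfloor u(x)/\delta\rfloor$. Then \[ \limsup_{\delta\to0^{+}}\Lambda_{\delta,p}(S_{\delta}u,\mathbb{R})\leq\frac{2}{p}C_{p}\int_{\mathbb{R}}|u'(x)|^{p}\,dx. \]
   Context: For $\delta>0$, $p\geq1$ and measurable $v:\mathbb{R}\to\mathbb{R}$, $\Lambda_{\delta,p}(v,\mathbb{R}):=\iint_{\{(x,y)\in\mathbb{R}^{2}:|v(y)-v(x)|>\delta\}}\frac{\delta^{p}}{|y-x|^{1+p}}\,dx\,dy$. $C_{p}:=\frac{1}{p-1}\left(1-\frac{1}{2^{p-1}}\right)$ if $p>1$ and $C_{1}:=\log2$. $\lfloor\cdot\rfloor$ is the integer part (floor). *)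

theory Defs
  imports "HOL-Analysis.Analysis"
begin

definition Lambda :: "real \<Rightarrow> real \<Rightarrow> (real \<Rightarrow> real) \<Rightarrow> ennreal" where
  "Lambda \<delta> p v =
     (\<integral>\<^sup>+ z. indicator {(x, y). \<bar>v y - v x\<bar> > \<delta>} z *
              ennreal (\<delta> powr p / \<bar>snd z - fst z\<bar> powr (1 + p)) \<partial>(lborel \<Otimes>\<^sub>M lborel))"

definition C_const :: "real \<Rightarrow> real" where
  "C_const p = (if p > 1 then (1 / (p - 1)) * (1 - 1 / 2 powr (p - 1)) else ln 2)"

definition S_floor :: "real \<Rightarrow> (real \<Rightarrow> real) \<Rightarrow> real \<Rightarrow> real" where
  "S_floor \<delta> u x = \<delta> * real_of_int \<lfloor>u x / \<delta>\<rfloor>"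

end

theory Submission
  imports Defs
begin

text \<open>
  Write \<open>J x\<close> for the inner integral of \<open>Lambda\<close> at \<open>x\<close>. If \<open>u x = \<delta> (n + t)\<close> with
  \<open>0 \<le> t < 1\<close>, then \<open>S_floor \<delta> u\<close> changes by more than \<open>\<delta>\<close> between \<open>x\<close> and \<open>y\<close> only if
  \<open>u\<close> rises by \<open>(2 - t) \<delta>\<close> or falls by \<open>(1 + t) \<delta>\<close>. If the slope of \<open>u\<close> near \<open>x\<close> lies in
  \<open>[-Q, P]\<close>, this forces \<open>|y - x| \<ge> (2 - t) \<delta> / P\<close> resp. \<open>(1 + t) \<delta> / Q\<close>, and integrating
  the kernel gives \<open>J x \<le> (P^p + Q^p) H(t) / p + O(\<delta>^p)\<close> with
  \<open>H(t) = gap_weight p t = (2 - t)^-p + (1 + t)^-p\<close>: the scale \<open>\<delta>\<close> cancels.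

  Cut the support into cells of length \<open>\<eta>\<close>. On a cell where \<open>u'\<close> is close to a constant
  \<open>c \<noteq> 0\<close>, the substitution \<open>s = u / \<delta>\<close> makes \<open>t = frac (u / \<delta>)\<close> run through about
  \<open>|c| \<eta> / \<delta>\<close> periods, so the cell contributes about
  \<open>|c|^p \<eta> (\<integral>\<^sub>0\<^sup>1 H) / p = (2 / p) C_p |c|^p \<eta>\<close>, the integral of \<open>(2 / p) C_p |u'|^p\<close>
  over the cell. Cells close to \<open>S\<close> or where
  \<open>|u'|\<close> is small contribute arbitrarily little, and all remaining errors vanish as
  \<open>\<delta> \<rightarrow> 0\<close>.
\<close>

subsection \<open>Kernel masses\<close>

lemma nn_integral_powr_tail_right:
  fixes x r p :: real
  assumes "r > 0" and "p > 0"
  shows "(\<integral>\<^sup>+y. indicator {x+r..} y * ennreal ((y-x) powr (-1-p)) \<partial>lborel) = ennreal (r powr (-p) / p)"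
proof -
  have "(\<integral>\<^sup>+y. indicator {x+r..} y * ennreal ((y-x) powr (-1-p)) \<partial>lborel)
      = (\<integral>\<^sup>+y. ennreal (y powr (-1-p)) * indicator {r..} y \<partial>lborel)"
    by (subst nn_integral_real_affine[where c=1 and t=x])
       (auto intro!: nn_integral_cong split: split_indicator simp: mult.commute)
  also have "\<dots> = ennreal (-(r powr (-1-p+1)) / (-1-p+1))"
    by (rule nn_integral_has_integral_lebesgue'[OF _ has_integral_powr_to_inf]) (use assms in auto)
  also have "-(r powr (-1-p+1)) / (-1-p+1) = r powr (-p) / p"
    using assms by (simp add: field_simps)
  finally show ?thesis .
qed

lemma nn_integral_powr_tail_left:
  fixes x r p :: real
  assumes "r > 0" and "p > 0"
  shows "(\<integral>\<^sup>+y. indicator {..x-r} y * ennreal ((x-y) powr (-1-p)) \<partial>lborel) = ennreal (r powr (-p) / p)"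
proof -
  have "(\<integral>\<^sup>+y. indicator {..x-r} y * ennreal ((x-y) powr (-1-p)) \<partial>lborel)
      = (\<integral>\<^sup>+y. indicator {-x+r..} y * ennreal ((y-(-x)) powr (-1-p)) \<partial>lborel)"
    by (subst nn_integral_real_affine[where c="-1" and t=0])
       (auto intro!: nn_integral_cong split: split_indicator)
  then show ?thesis using nn_integral_powr_tail_right[of r p "-x", OF assms] by simp
qed

lemma nn_integral_kernel_right_le:
  fixes x r p \<delta> :: real
  assumes r: "r > 0" and p: "p > 0" and A: "A \<subseteq> {x+r..}"
  shows "(\<integral>\<^sup>+y. indicator A y * ennreal (\<delta> powr p / \<bar>y-x\<bar> powr (1+p)) \<partial>lborel)
    \<le> ennreal (\<delta> powr p * r powr (-p) / p)"
proof -
  have "(\<integral>\<^sup>+y. indicator A y * ennreal (\<delta> powr p / \<bar>y-x\<bar> powr (1+p)) \<partial>lborel)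
     \<le> (\<integral>\<^sup>+y. ennreal (\<delta> powr p) * (indicator {x+r..} y * ennreal ((y-x) powr (-1-p))) \<partial>lborel)"
  proof (intro nn_integral_mono)
    fix y
    show "indicator A y * ennreal (\<delta> powr p / \<bar>y-x\<bar> powr (1+p))
      \<le> ennreal (\<delta> powr p) * (indicator {x+r..} y * ennreal ((y-x) powr (-1-p)))"
    proof (cases "y \<in> A")
      case True
      then have "y - x \<ge> r" using A by auto
      moreover have "\<delta> powr p / (y-x) powr (1+p) = \<delta> powr p * (y-x) powr (-1-p)"
        using powr_minus[of "y-x" "1+p"] by (simp add: divide_inverse)
      ultimately show ?thesis using True r by (simp add: ennreal_mult'[symmetric])
    qed simp
  qed
  also have "\<dots> = ennreal (\<delta> powr p) * ennreal (r powr (-p) / p)"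
    by (subst nn_integral_cmult) (simp_all add: nn_integral_powr_tail_right[OF r p])
  also have "\<dots> = ennreal (\<delta> powr p * r powr (-p) / p)"
    by (simp add: ennreal_mult'[symmetric])
  finally show ?thesis .
qed

lemma nn_integral_kernel_left_le:
  fixes x r p \<delta> :: real
  assumes r: "r > 0" and p: "p > 0" and A: "A \<subseteq> {..x-r}"
  shows "(\<integral>\<^sup>+y. indicator A y * ennreal (\<delta> powr p / \<bar>y-x\<bar> powr (1+p)) \<partial>lborel)
    \<le> ennreal (\<delta> powr p * r powr (-p) / p)"
proof -
  have "(\<integral>\<^sup>+y. indicator A y * ennreal (\<delta> powr p / \<bar>y-x\<bar> powr (1+p)) \<partial>lborel)
     \<le> (\<integral>\<^sup>+y. ennreal (\<delta> powr p) * (indicator {..x-r} y * ennreal ((x-y) powr (-1-p))) \<partial>lborel)"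
  proof (intro nn_integral_mono)
    fix y
    show "indicator A y * ennreal (\<delta> powr p / \<bar>y-x\<bar> powr (1+p))
      \<le> ennreal (\<delta> powr p) * (indicator {..x-r} y * ennreal ((x-y) powr (-1-p)))"
    proof (cases "y \<in> A")
      case True
      then have "x - y \<ge> r" using A by auto
      moreover have "\<delta> powr p / (x-y) powr (1+p) = \<delta> powr p * (x-y) powr (-1-p)"
        using powr_minus[of "x-y" "1+p"] by (simp add: divide_inverse)
      ultimately show ?thesis using True r by (simp add: ennreal_mult'[symmetric])
    qed simp
  qed
  also have "\<dots> = ennreal (\<delta> powr p) * ennreal (r powr (-p) / p)"
    by (subst nn_integral_cmult) (simp_all add: nn_integral_powr_tail_left[OF r p])
  also have "\<dots> = ennreal (\<delta> powr p * r powr (-p) / p)"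
    by (simp add: ennreal_mult'[symmetric])
  finally show ?thesis .
qed

lemma exists_kernel_radius:
  fixes w K c \<delta> p :: real
  assumes w: "w > 0" and K: "K \<ge> 0" and c: "c > 0" and d: "\<delta> > 0" and p: "p > 0"
  obtains r where "r > 0" "r \<le> w" "K > 0 \<Longrightarrow> r \<le> c*\<delta>/K"
    "\<delta> powr p * r powr (-p) \<le> \<delta> powr p * w powr (-p) + K powr p * c powr (-p)"
proof
  define r where "r = (if K = 0 then w else min w (c*\<delta>/K))"
  show "r > 0" "r \<le> w" "K > 0 \<Longrightarrow> r \<le> c*\<delta>/K" using assms by (auto simp: r_def)
  show "\<delta> powr p * r powr (-p) \<le> \<delta> powr p * w powr (-p) + K powr p * c powr (-p)"
  proof (cases "r = w")
    case False
    then have K0: "K > 0" and rr: "r = c*\<delta>/K" using K by (auto simp: r_def min_def split: if_splits)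
    have "\<delta> powr p * r powr (-p) = \<delta> powr p * ((c*\<delta>) powr (-p) / K powr (-p))"
      using rr K0 c d by (simp add: powr_divide)
    also have "\<dots> = K powr p * c powr (-p)"
      using K0 c d by (simp add: powr_mult powr_minus field_simps)
    finally show ?thesis by simp
  qed simp
qed

lemma nn_integral_kernel_window_right_le:
  fixes x w K c \<delta> p :: real
  assumes w: "w > 0" and K: "K \<ge> 0" and c: "c > 0" and d: "\<delta> > 0" and p: "p > 0"
    and A: "A \<subseteq> {x<..}" and near: "\<And>y. y \<in> A \<Longrightarrow> y - x < w \<Longrightarrow> c*\<delta> \<le> K*(y-x)"
  shows "(\<integral>\<^sup>+y. indicator A y * ennreal (\<delta> powr p / \<bar>y-x\<bar> powr (1+p)) \<partial>lborel)
     \<le> ennreal ((\<delta> powr p * w powr (-p) + K powr p * c powr (-p)) / p)"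
proof -
  obtain r where r: "r > 0" "r \<le> w" "K > 0 \<Longrightarrow> r \<le> c*\<delta>/K"
    and bound: "\<delta> powr p * r powr (-p) \<le> \<delta> powr p * w powr (-p) + K powr p * c powr (-p)"
    using exists_kernel_radius[OF w K c d p] by blast
  have "A \<subseteq> {x+r..}"
  proof
    fix y assume y: "y \<in> A"
    show "y \<in> {x+r..}"
    proof (cases "y - x < w")
      case True
      with near[OF y] have h: "c*\<delta> \<le> K*(y-x)" .
      then have "K > 0" using K mult_pos_pos[OF c d] by (cases "K = 0") auto
      then have "c*\<delta>/K \<le> y - x" using h by (simp add: divide_le_eq mult.commute)
      then show ?thesis using r(3)[OF \<open>K > 0\<close>] by auto
    qed (use r(2) in auto)
  qed
  from nn_integral_kernel_right_le[OF r(1) p this] show ?thesis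
    using bound p by (meson divide_right_mono ennreal_leI less_imp_le order_trans)
qed

lemma nn_integral_kernel_window_left_le:
  fixes x w K c \<delta> p :: real
  assumes w: "w > 0" and K: "K \<ge> 0" and c: "c > 0" and d: "\<delta> > 0" and p: "p > 0"
    and A: "A \<subseteq> {..<x}" and near: "\<And>y. y \<in> A \<Longrightarrow> x - y < w \<Longrightarrow> c*\<delta> \<le> K*(x-y)"
  shows "(\<integral>\<^sup>+y. indicator A y * ennreal (\<delta> powr p / \<bar>y-x\<bar> powr (1+p)) \<partial>lborel)
     \<le> ennreal ((\<delta> powr p * w powr (-p) + K powr p * c powr (-p)) / p)"
proof -
  obtain r where r: "r > 0" "r \<le> w" "K > 0 \<Longrightarrow> r \<le> c*\<delta>/K"
    and bound: "\<delta> powr p * r powr (-p) \<le> \<delta> powr p * w powr (-p) + K powr p * c powr (-p)"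
    using exists_kernel_radius[OF w K c d p] by blast
  have "A \<subseteq> {..x-r}"
  proof
    fix y assume y: "y \<in> A"
    show "y \<in> {..x-r}"
    proof (cases "x - y < w")
      case True
      with near[OF y] have h: "c*\<delta> \<le> K*(x-y)" .
      then have "K > 0" using K mult_pos_pos[OF c d] by (cases "K = 0") auto
      then have "c*\<delta>/K \<le> x - y" using h by (simp add: divide_le_eq mult.commute)
      then show ?thesis using r(3)[OF \<open>K > 0\<close>] by auto
    qed (use r(2) in auto)
  qed
  from nn_integral_kernel_left_le[OF r(1) p this] show ?thesis
    using bound p by (meson divide_right_mono ennreal_leI less_imp_le order_trans)
qed

lemma increment_le_of_deriv_le:
  fixes u u' :: "real \<Rightarrow> real"
  assumes S: "finite S" and der: "\<And>x. x \<notin> S \<Longrightarrow> (u has_real_derivative u' x) (at x)"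
    and cont: "continuous_on UNIV u" and ab: "a \<le> b"
    and bnd: "\<And>t. t \<in> {a..b} \<Longrightarrow> t \<notin> S \<Longrightarrow> u' t \<le> P"
  shows "u b - u a \<le> P * (b - a)"
proof -
  define ud where "ud t = (if t \<in> S then P else u' t)" for t
  have "(ud has_integral (u b - u a)) {a..b}"
  proof (rule fundamental_theorem_of_calculus_interior_strong[OF S ab])
    fix x assume "x \<in> {a<..<b} - S"
    then show "(u has_vector_derivative ud x) (at x)"
      using der[of x] by (simp add: ud_def has_real_derivative_iff_has_vector_derivative)
  qed (use cont continuous_on_subset in blast)
  moreover have "((\<lambda>x. P) has_integral (P * (b - a))) {a..b}"
    using has_integral_const_real[of P a b] ab by (simp add: mult.commute)
  ultimately show ?thesis
    by (rule has_integral_le) (use bnd in \<open>auto simp: ud_def\<close>)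
qed

lemma decrement_le_of_deriv_ge:
  fixes u u' :: "real \<Rightarrow> real"
  assumes S: "finite S" and der: "\<And>x. x \<notin> S \<Longrightarrow> (u has_real_derivative u' x) (at x)"
    and cont: "continuous_on UNIV u" and ab: "a \<le> b"
    and bnd: "\<And>t. t \<in> {a..b} \<Longrightarrow> t \<notin> S \<Longrightarrow> -Q \<le> u' t"
  shows "u a - u b \<le> Q * (b - a)"
proof -
  have "(\<lambda>x. - u x) b - (\<lambda>x. - u x) a \<le> Q * (b - a)"
  proof (rule increment_le_of_deriv_le[OF S _ _ ab])
    show "((\<lambda>x. - u x) has_real_derivative - u' x) (at x)" if "x \<notin> S" for x
      using der[OF that] by (rule DERIV_minus)
    show "- u' t \<le> Q" if "t \<in> {a..b}" "t \<notin> S" for t using bnd[OF that] by simp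
  qed (use cont in \<open>intro continuous_intros\<close>)
  then show ?thesis by simp
qed

lemma nn_integral_kernel_rise_right_le:
  fixes u u' :: "real \<Rightarrow> real"
  assumes S: "finite S" and der: "\<And>x. x \<notin> S \<Longrightarrow> (u has_real_derivative u' x) (at x)"
    and cont: "continuous_on UNIV u" and d: "\<delta> > 0" and p: "p > 0" and w: "w > 0"
    and K: "K \<ge> 0" and c: "c > 0" and bnd: "\<And>t. t \<in> {x..x+w} \<Longrightarrow> t \<notin> S \<Longrightarrow> u' t \<le> K"
  shows "(\<integral>\<^sup>+y. indicator {y. x < y \<and> c * \<delta> \<le> u y - u x} y * ennreal (\<delta> powr p / \<bar>y-x\<bar> powr (1+p)) \<partial>lborel)
     \<le> ennreal ((\<delta> powr p * w powr (-p) + K powr p * c powr (-p)) / p)"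
proof (rule nn_integral_kernel_window_right_le[OF w K c d p])
  fix y assume y: "y \<in> {y. x < y \<and> c * \<delta> \<le> u y - u x}" "y - x < w"
  then have "u y - u x \<le> K * (y - x)"
    using bnd by (intro increment_le_of_deriv_le[OF S der cont]) auto
  with y show "c * \<delta> \<le> K * (y - x)" by simp
qed auto

lemma nn_integral_kernel_rise_left_le:
  fixes u u' :: "real \<Rightarrow> real"
  assumes S: "finite S" and der: "\<And>x. x \<notin> S \<Longrightarrow> (u has_real_derivative u' x) (at x)"
    and cont: "continuous_on UNIV u" and d: "\<delta> > 0" and p: "p > 0" and w: "w > 0"
    and K: "K \<ge> 0" and c: "c > 0" and bnd: "\<And>t. t \<in> {x-w..x} \<Longrightarrow> t \<notin> S \<Longrightarrow> -K \<le> u' t"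
  shows "(\<integral>\<^sup>+y. indicator {y. y < x \<and> c * \<delta> \<le> u y - u x} y * ennreal (\<delta> powr p / \<bar>y-x\<bar> powr (1+p)) \<partial>lborel)
     \<le> ennreal ((\<delta> powr p * w powr (-p) + K powr p * c powr (-p)) / p)"
proof (rule nn_integral_kernel_window_left_le[OF w K c d p])
  fix y assume y: "y \<in> {y. y < x \<and> c * \<delta> \<le> u y - u x}" "x - y < w"
  then have "u y - u x \<le> K * (x - y)"
    using bnd by (intro decrement_le_of_deriv_ge[OF S der cont]) auto
  with y show "c * \<delta> \<le> K * (x - y)" by simp
qed auto

subsection \<open>The gap weight\<close>

definition gap_weight :: "real \<Rightarrow> real \<Rightarrow> real" where
  "gap_weight p t = (2 - t) powr (-p) + (1 + t) powr (-p)"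

lemma gap_weight_nonneg: "gap_weight p t \<ge> 0"
  by (simp add: gap_weight_def)

lemma gap_weight_frac_le_2:
  assumes "p \<ge> 0"
  shows "gap_weight p (frac s) \<le> 2"
proof -
  have le1: "x powr (-p) \<le> 1" if "x \<ge> 1" for x :: real
    using powr_mono[of "-p" 0 x] that assms by simp
  show ?thesis
    using le1[of "2 - frac s"] le1[of "1 + frac s"] frac_lt_1[of s] frac_ge_0[of s]
    by (simp add: gap_weight_def)
qed

lemma gap_weight_frac_uminus: "gap_weight p (frac (-s)) = gap_weight p (frac s)"
  by (cases "s \<in> \<int>") (simp_all add: frac_neg gap_weight_def add.commute frac_eq_0_iff[THEN iffD2])

lemma gap_weight_frac_plus_1: "gap_weight p (frac (s + 1)) = gap_weight p (frac s)"
  by (simp add: frac_def)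

lemma borel_measurable_gap_weight_frac [measurable]:
  "(\<lambda>s. gap_weight p (frac s)) \<in> borel_measurable borel"
  unfolding gap_weight_def frac_def by measurable

lemma C_const_pos:
  assumes "p \<ge> 1"
  shows "C_const p > 0"
proof (cases "p = 1")
  case False
  then have "p > 1" using assms by simp
  moreover have "1 / 2 powr (p-1) < 1" using \<open>p > 1\<close> by (simp add: gr_one_powr)
  ultimately show ?thesis by (simp add: C_const_def)
qed (simp add: C_const_def)

lemma gap_weight_has_integral:
  assumes p: "p \<ge> 1"
  shows "(gap_weight p has_integral (2 * C_const p)) {0..1}"
proof (cases "p = 1")
  case True
  define F where "F t = ln (1+t) - ln (2-t)" for t :: real
  have "(gap_weight p has_integral (F 1 - F 0)) {0..1}"
  proof (rule fundamental_theorem_of_calculus)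
    fix t :: real assume t: "t \<in> {0..1}"
    have "(F has_real_derivative (1/(1+t) + 1/(2-t))) (at t within {0..1})"
      unfolding F_def using t by (auto intro!: derivative_eq_intros)
    moreover have "1/(1+t) + 1/(2-t) = gap_weight p t"
      using True t by (simp add: gap_weight_def powr_minus_divide)
    ultimately show "(F has_vector_derivative gap_weight p t) (at t within {0..1})"
      by (simp add: has_real_derivative_iff_has_vector_derivative)
  qed simp
  moreover have "F 1 - F 0 = 2 * C_const p" using True by (simp add: F_def C_const_def)
  ultimately show ?thesis by simp
next
  case False
  then have p1: "p > 1" using p by auto
  define F where "F t = ((2-t) powr (1-p) - (1+t) powr (1-p)) / (p-1)" for t :: real
  have "(gap_weight p has_integral (F 1 - F 0)) {0..1}"
  proof (rule fundamental_theorem_of_calculus)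
    fix t :: real assume t: "t \<in> {0..1}"
    have "(F has_real_derivative
       (((1-p) * (2-t) powr (1-p-1) * (-1) - (1-p) * (1+t) powr (1-p-1) * 1) / (p-1))) (at t within {0..1})"
      unfolding F_def using t p1 by (auto intro!: derivative_eq_intros)
    moreover have "((1-p) * (2-t) powr (1-p-1) * (-1) - (1-p) * (1+t) powr (1-p-1) * 1) / (p-1)
        = gap_weight p t"
      using p1 by (simp add: gap_weight_def field_simps)
    ultimately show "(F has_vector_derivative gap_weight p t) (at t within {0..1})"
      by (simp add: has_real_derivative_iff_has_vector_derivative)
  qed simp
  moreover have "F 1 - F 0 = 2 * C_const p"
  proof -
    have e: "1 / 2 powr (p - 1) = 2 powr (1 - p)"
      by (simp add: powr_minus_divide[symmetric] powr_minus)
    have "F 1 - F 0 = ((1 - 2 powr (1-p)) - (2 powr (1-p) - 1)) / (p - 1)"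
      by (simp add: F_def diff_divide_distrib)
    also have "\<dots> = 2 * ((1 / (p - 1)) * (1 - 1 / 2 powr (p - 1)))" by (simp add: e field_simps)
    finally show ?thesis using p1 by (simp add: C_const_def)
  qed
  ultimately show ?thesis by simp
qed

lemma nn_integral_gap_weight_frac_unit:
  assumes "p \<ge> 1"
  shows "(\<integral>\<^sup>+s. ennreal (gap_weight p (frac s)) * indicator {0..1} s \<partial>lborel) = ennreal (2 * C_const p)"
proof -
  have "(\<integral>\<^sup>+s. ennreal (gap_weight p (frac s)) * indicator {0..1} s \<partial>lborel)
      = (\<integral>\<^sup>+s. ennreal (gap_weight p s) * indicator {0..1} s \<partial>lborel)"
  proof (intro nn_integral_cong)
    fix s :: real
    show "ennreal (gap_weight p (frac s)) * indicator {0..1} s = ennreal (gap_weight p s) * indicator {0..1} s"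
      by (cases "s \<in> {0..<1}"; cases "s = 1") (auto simp: frac_eq gap_weight_def indicator_def)
  qed
  also have "\<dots> = ennreal (2 * C_const p)"
    by (rule nn_integral_has_integral_lebesgue'[OF _ gap_weight_has_integral[OF assms]])
       (simp add: gap_weight_nonneg)
  finally show ?thesis .
qed

lemma periodic_shift_of_int:
  fixes G :: "real \<Rightarrow> 'a"
  assumes per: "\<And>s. G (s + 1) = G s"
  shows "G (s + real_of_int k) = G s"
proof -
  have shift_nat: "G (t + real n) = G t" for t n
  proof (induction n)
    case (Suc n)
    have "G (t + real (Suc n)) = G ((t + real n) + 1)" by (simp add: algebra_simps)
    also have "\<dots> = G t" using per Suc by simp
    finally show ?case .
  qed simp
  show ?thesis
  proof (cases "k \<ge> 0")
    case True then show ?thesis using shift_nat[of s "nat k"] by simp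
  next
    case False
    then show ?thesis using shift_nat[of "s + real_of_int k" "nat (-k)"] by simp
  qed
qed

lemma nn_integral_periodic_unit_shift:
  fixes G :: "real \<Rightarrow> real"
  assumes per: "\<And>s. G (s + 1) = G s" and M: "G \<in> borel_measurable borel"
  shows "(\<integral>\<^sup>+s. ennreal (G s) * indicator {real_of_int k..real_of_int k+1} s \<partial>lborel)
    = (\<integral>\<^sup>+s. ennreal (G s) * indicator {0..1} s \<partial>lborel)"
proof -
  have "(\<integral>\<^sup>+s. ennreal (G s) * indicator {real_of_int k..real_of_int k+1} s \<partial>lborel)
    = (\<integral>\<^sup>+s. ennreal (G (real_of_int k + s)) * indicator {real_of_int k..real_of_int k+1} (real_of_int k + s) \<partial>lborel)"
    by (subst nn_integral_real_affine[where c=1 and t="real_of_int k"]) (use M in auto)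
  also have "\<dots> = (\<integral>\<^sup>+s. ennreal (G s) * indicator {0..1} s \<partial>lborel)"
    using periodic_shift_of_int[of G, OF per]
    by (intro nn_integral_cong) (auto simp: add.commute indicator_def)
  finally show ?thesis .
qed

lemma nn_integral_periodic_le:
  fixes G :: "real \<Rightarrow> real"
  assumes per: "\<And>s. G (s + 1) = G s" and M: "G \<in> borel_measurable borel"
  shows "(\<integral>\<^sup>+s. ennreal (G s) * indicator {\<alpha>..\<beta>} s \<partial>lborel)
    \<le> ennreal (\<beta> - \<alpha> + 2) * (\<integral>\<^sup>+s. ennreal (G s) * indicator {0..1} s \<partial>lborel)"
proof (cases "\<alpha> \<le> \<beta>")
  case True
  define K where "K = {\<lfloor>\<alpha>\<rfloor>..\<lfloor>\<beta>\<rfloor>}"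
  define I where "I = (\<integral>\<^sup>+s. ennreal (G s) * indicator {0..1} s \<partial>lborel)"
  have "(\<integral>\<^sup>+s. ennreal (G s) * indicator {\<alpha>..\<beta>} s \<partial>lborel)
      \<le> (\<integral>\<^sup>+s. (\<Sum>k\<in>K. ennreal (G s) * indicator {real_of_int k..real_of_int k+1} s) \<partial>lborel)"
  proof (intro nn_integral_mono)
    fix s
    show "ennreal (G s) * indicator {\<alpha>..\<beta>} s
      \<le> (\<Sum>k\<in>K. ennreal (G s) * indicator {real_of_int k..real_of_int k+1} s)"
    proof (cases "s \<in> {\<alpha>..\<beta>}")
      case True
      then have k: "\<lfloor>s\<rfloor> \<in> K" by (auto simp: K_def floor_mono)
      have "ennreal (G s) * indicator {\<alpha>..\<beta>} s
          = ennreal (G s) * indicator {real_of_int \<lfloor>s\<rfloor>..real_of_int \<lfloor>s\<rfloor>+1} s"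
        using True by (simp add: indicator_def)
      also have "\<dots> \<le> (\<Sum>k\<in>K. ennreal (G s) * indicator {real_of_int k..real_of_int k+1} s)"
        by (rule member_le_sum[OF k]) (auto simp: K_def)
      finally show ?thesis .
    qed simp
  qed
  also have "\<dots> = (\<Sum>k\<in>K. (\<integral>\<^sup>+s. ennreal (G s) * indicator {real_of_int k..real_of_int k+1} s \<partial>lborel))"
    by (rule nn_integral_sum) (use M in auto)
  also have "\<dots> = of_nat (card K) * I"
    unfolding I_def using nn_integral_periodic_unit_shift[OF per M] by simp
  also have "\<dots> \<le> ennreal (\<beta> - \<alpha> + 2) * I"
  proof (intro mult_right_mono)
    have "real (card K) = real_of_int (\<lfloor>\<beta>\<rfloor> - \<lfloor>\<alpha>\<rfloor> + 1)" using True by (simp add: K_def floor_mono)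
    also have "\<dots> \<le> \<beta> - \<alpha> + 2" by linarith
    finally show "(of_nat (card K) :: ennreal) \<le> ennreal (\<beta> - \<alpha> + 2)"
      by (metis ennreal_leI ennreal_of_nat_eq_real_of_nat)
  qed simp
  finally show ?thesis unfolding I_def .
qed simp

lemma nn_integral_periodic_comp_le:
  fixes G g g' :: "real \<Rightarrow> real"
  assumes per: "\<And>s. G (s + 1) = G s" and M: "G \<in> borel_measurable borel" and nn: "\<And>s. G s \<ge> 0"
    and ab: "a \<le> b" and der: "\<And>x. x \<in> {a..b} \<Longrightarrow> (g has_real_derivative g' x) (at x)"
    and cg: "continuous_on {a..b} g'" and m: "m > 0" and gm: "\<And>x. x \<in> {a..b} \<Longrightarrow> g' x \<ge> m"
  shows "(\<integral>\<^sup>+x. ennreal (G (g x)) * indicator {a..b} x \<partial>lborel)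
    \<le> ennreal ((g b - g a + 2) / m) * (\<integral>\<^sup>+s. ennreal (G s) * indicator {0..1} s \<partial>lborel)"
proof -
  txt \<open>\<open>g\<close> and \<open>g'\<close> are only controlled on \<open>[a, b]\<close>; clamping the argument makes the
    integrand visibly Borel measurable on all of \<open>\<real>\<close>.\<close>
  define cl where "cl x = max a (min b x)" for x
  have clab: "range cl \<subseteq> {a..b}" using ab by (auto simp: cl_def)
  have ccl: "continuous_on UNIV cl" unfolding cl_def by (intro continuous_intros)
  have cgg: "continuous_on {a..b} g" using der by (rule has_real_derivative_imp_continuous_on)
  have "continuous_on UNIV (g \<circ> cl)" "continuous_on UNIV (g' \<circ> cl)"
    using continuous_on_compose[OF ccl continuous_on_subset[OF cgg clab]]
      continuous_on_compose[OF ccl continuous_on_subset[OF cg clab]] by auto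
  note [measurable] = this[THEN borel_measurable_continuous_onI] M
  define h where "h x = ennreal (G (g x) * g' x * indicator {a..b} x)" for x
  have h_cl: "h = (\<lambda>x. ennreal (G ((g \<circ> cl) x) * (g' \<circ> cl) x * indicator {a..b} x))"
    by (auto simp: h_def cl_def fun_eq_iff indicator_def)
  have hm: "h \<in> borel_measurable borel" unfolding h_cl by measurable
  have "(\<integral>\<^sup>+x. ennreal (G (g x)) * indicator {a..b} x \<partial>lborel) \<le> (\<integral>\<^sup>+x. ennreal (1/m) * h x \<partial>lborel)"
  proof (intro nn_integral_mono)
    fix x show "ennreal (G (g x)) * indicator {a..b} x \<le> ennreal (1/m) * h x"
    proof (cases "x \<in> {a..b}")
      case True
      have "G (g x) \<le> 1/m * (G (g x) * g' x)"
        using gm[OF True] m nn[of "g x"] by (simp add: field_simps mult_right_mono)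
      then show ?thesis using True m nn[of "g x"] gm[OF True]
        by (simp add: h_def ennreal_mult'[symmetric] ennreal_leI)
    qed simp
  qed
  also have "\<dots> = ennreal (1/m) * (\<integral>\<^sup>+x. h x \<partial>lborel)"
    by (rule nn_integral_cmult) (use hm in simp)
  also have "(\<integral>\<^sup>+x. h x \<partial>lborel) = (\<integral>\<^sup>+x. ennreal (G x * indicator {g a..g b} x) \<partial>lborel)"
    unfolding h_def
  proof (rule nn_integral_substitution[symmetric, OF _ der cg _ ab])
    show "set_borel_measurable borel {g a..g b} G" unfolding set_borel_measurable_def by measurable
    show "\<And>x. x \<in> {a..b} \<Longrightarrow> 0 \<le> g' x" using gm m by (meson less_le_trans less_imp_le)
  qed auto
  also have "\<dots> = (\<integral>\<^sup>+x. ennreal (G x) * indicator {g a..g b} x \<partial>lborel)"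
    by (intro nn_integral_cong) (simp add: indicator_def)
  also have "\<dots> \<le> ennreal (g b - g a + 2) * (\<integral>\<^sup>+s. ennreal (G s) * indicator {0..1} s \<partial>lborel)"
    by (rule nn_integral_periodic_le[OF per M])
  finally have "(\<integral>\<^sup>+x. ennreal (G (g x)) * indicator {a..b} x \<partial>lborel)
    \<le> ennreal (1/m) * (ennreal (g b - g a + 2) * (\<integral>\<^sup>+s. ennreal (G s) * indicator {0..1} s \<partial>lborel))"
    by (simp add: mult_left_mono)
  also have "\<dots> = ennreal ((g b - g a + 2) / m) * (\<integral>\<^sup>+s. ennreal (G s) * indicator {0..1} s \<partial>lborel)"
    using m by (simp add: ennreal_mult'[symmetric] mult.assoc[symmetric])
  finally show ?thesis .
qed

lemma nn_integral_gap_weight_frac_comp_le: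
  fixes g g' :: "real \<Rightarrow> real"
  assumes p: "p \<ge> 1" and ab: "a \<le> b"
    and der: "\<And>x. x \<in> {a..b} \<Longrightarrow> (g has_real_derivative g' x) (at x)"
    and cg: "continuous_on {a..b} g'" and m: "m > 0" and gm: "\<And>x. x \<in> {a..b} \<Longrightarrow> g' x \<ge> m"
  shows "(\<integral>\<^sup>+x. ennreal (gap_weight p (frac (g x))) * indicator {a..<b} x \<partial>lborel)
     \<le> ennreal ((g b - g a + 2) / m * (2 * C_const p))"
proof -
  have "(\<integral>\<^sup>+x. ennreal (gap_weight p (frac (g x))) * indicator {a..<b} x \<partial>lborel)
     \<le> (\<integral>\<^sup>+x. ennreal (gap_weight p (frac (g x))) * indicator {a..b} x \<partial>lborel)"
    by (intro nn_integral_mono) (auto simp: indicator_def)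
  also have "\<dots> \<le> ennreal ((g b - g a + 2) / m) * ennreal (2 * C_const p)"
    using nn_integral_periodic_comp_le[OF gap_weight_frac_plus_1[of p]
        borel_measurable_gap_weight_frac[of p] gap_weight_nonneg[of p] ab der cg m gm]
    by (simp add: nn_integral_gap_weight_frac_unit[OF p])
  also have "\<dots> = ennreal ((g b - g a + 2) / m * (2 * C_const p))"
    using C_const_pos[OF p] by (subst ennreal_mult''[symmetric]) auto
  finally show ?thesis .
qed

subsection \<open>The inner integral\<close>

definition jump_integral :: "real \<Rightarrow> real \<Rightarrow> (real \<Rightarrow> real) \<Rightarrow> real \<Rightarrow> ennreal" where
  "jump_integral \<delta> p v x =
     (\<integral>\<^sup>+y. indicator {y. \<delta> < \<bar>v y - v x\<bar>} y * ennreal (\<delta> powr p / \<bar>y - x\<bar> powr (1 + p)) \<partial>lborel)"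

lemma borel_measurable_jump_integral [measurable]:
  assumes [measurable]: "v \<in> borel_measurable borel"
  shows "jump_integral \<delta> p v \<in> borel_measurable borel"
  unfolding jump_integral_def by measurable

lemma Lambda_eq_nn_integral_jump_integral:
  assumes [measurable]: "v \<in> borel_measurable borel"
  shows "Lambda \<delta> p v = (\<integral>\<^sup>+x. jump_integral \<delta> p v x \<partial>lborel)"
proof -
  have "(\<lambda>z. indicator {(x, y). \<delta> < \<bar>v y - v x\<bar>} z *
      ennreal (\<delta> powr p / \<bar>snd z - fst z\<bar> powr (1 + p))) \<in> borel_measurable (lborel \<Otimes>\<^sub>M lborel)"
    by measurable
  then show ?thesis unfolding Lambda_def jump_integral_def
    by (subst lborel.nn_integral_fst[symmetric]) (simp_all add: indicator_def)
qed

lemma borel_measurable_S_floor [measurable]: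
  assumes [measurable]: "u \<in> borel_measurable borel"
  shows "S_floor \<delta> u \<in> borel_measurable borel"
  unfolding S_floor_def by measurable

lemma S_floor_jump_imp:
  fixes u :: "real \<Rightarrow> real"
  assumes d: "\<delta> > 0" and jump: "\<delta> < \<bar>S_floor \<delta> u y - S_floor \<delta> u x\<bar>"
  shows "(2 - frac (u x / \<delta>)) * \<delta> \<le> u y - u x \<or> (1 + frac (u x / \<delta>)) * \<delta> \<le> u x - u y"
proof -
  define n where "n z = \<lfloor>u z / \<delta>\<rfloor>" for z
  have x: "u x = \<delta> * (real_of_int (n x) + frac (u x / \<delta>))"
    using d by (simp add: n_def frac_def)
  have level: "\<delta> * real_of_int (n y) \<le> u y" "u y < \<delta> * (real_of_int (n y) + 1)"
  proof -
    have "real_of_int (n y) \<le> u y / \<delta>" "u y / \<delta> < real_of_int (n y) + 1"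
      unfolding n_def by linarith+
    then show "\<delta> * real_of_int (n y) \<le> u y" "u y < \<delta> * (real_of_int (n y) + 1)"
      using d by (simp_all add: field_simps)
  qed
  have "\<delta> * 1 < \<delta> * \<bar>real_of_int (n y - n x)\<bar>"
    using jump d by (simp add: S_floor_def n_def abs_mult right_diff_distrib[symmetric])
  then have "\<bar>n y - n x\<bar> > 1" using d by (simp add: mult_less_cancel_left_pos)
  then consider "real_of_int (n x) + 2 \<le> real_of_int (n y)" | "real_of_int (n y) + 1 \<le> real_of_int (n x) - 1"
    by linarith
  then show ?thesis
  proof cases
    case 1
    then have "\<delta> * (real_of_int (n x) + 2) \<le> \<delta> * real_of_int (n y)" using d by simp
    then show ?thesis using level(1) x by (simp add: algebra_simps)
  next
    case 2
    then have "\<delta> * (real_of_int (n y) + 1) \<le> \<delta> * (real_of_int (n x) - 1)" using d by simp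
    then show ?thesis using level(2) x by (simp add: algebra_simps)
  qed
qed

lemma jump_integral_S_floor_le:
  fixes u u' :: "real \<Rightarrow> real"
  assumes S: "finite S" and der: "\<And>x. x \<notin> S \<Longrightarrow> (u has_real_derivative u' x) (at x)"
    and cont: "continuous_on UNIV u" and d: "\<delta> > 0" and p: "p > 0" and w: "w > 0"
    and P: "P \<ge> 0" and Q: "Q \<ge> 0"
    and bnd: "\<And>t. t \<in> {x-w..x+w} \<Longrightarrow> t \<notin> S \<Longrightarrow> -Q \<le> u' t \<and> u' t \<le> P"
  shows "jump_integral \<delta> p (S_floor \<delta> u) x
    \<le> ennreal ((4 * \<delta> powr p * w powr (-p) + (P powr p + Q powr p) * gap_weight p (frac (u x / \<delta>))) / p)"
proof -
  note [measurable] = borel_measurable_continuous_onI[OF cont]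
  define \<theta> where "\<theta> = frac (u x / \<delta>)"
  have c1: "2 - \<theta> > 0" and c2: "1 + \<theta> > 0"
    unfolding \<theta>_def using frac_lt_1[of "u x / \<delta>"] frac_ge_0[of "u x / \<delta>"] by linarith+
  define ker where "ker y = ennreal (\<delta> powr p / \<bar>y-x\<bar> powr (1+p))" for y
  define A1 where "A1 = {y. x < y \<and> (2 - \<theta>) * \<delta> \<le> u y - u x}"
  define A2 where "A2 = {y. x < y \<and> (1 + \<theta>) * \<delta> \<le> u x - u y}"
  define A3 where "A3 = {y. y < x \<and> (2 - \<theta>) * \<delta> \<le> u y - u x}"
  define A4 where "A4 = {y. y < x \<and> (1 + \<theta>) * \<delta> \<le> u x - u y}"
  have [measurable]: "A1 \<in> sets borel" "A2 \<in> sets borel" "A3 \<in> sets borel" "A4 \<in> sets borel"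
    unfolding A1_def A2_def A3_def A4_def by measurable
  have [measurable]: "ker \<in> borel_measurable borel" unfolding ker_def by measurable
  have split: "indicator {y. \<delta> < \<bar>S_floor \<delta> u y - S_floor \<delta> u x\<bar>} y * ker y
      \<le> indicator A1 y * ker y + indicator A2 y * ker y + indicator A3 y * ker y + indicator A4 y * ker y" for y
  proof (cases "\<delta> < \<bar>S_floor \<delta> u y - S_floor \<delta> u x\<bar>")
    case True
    then have "y \<noteq> x" using d by auto
    with S_floor_jump_imp[OF d True] have "y \<in> A1 \<or> y \<in> A2 \<or> y \<in> A3 \<or> y \<in> A4"
      unfolding A1_def A2_def A3_def A4_def \<theta>_def by auto
    then show ?thesis by (auto simp: indicator_def intro: add_increasing add_increasing2)
  qed simp
  have der_minus: "((\<lambda>y. - u y) has_real_derivative - u' t) (at t)" if "t \<notin> S" for t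
    using der[OF that] by (rule DERIV_minus)
  have cont_minus: "continuous_on UNIV (\<lambda>y. - u y)" using cont by (intro continuous_intros)
  have slope_right: "u' t \<le> P" "- u' t \<le> Q" if "t \<in> {x..x+w}" "t \<notin> S" for t
    using bnd[of t] that w by auto
  have slope_left: "- Q \<le> u' t" "- P \<le> - u' t" if "t \<in> {x-w..x}" "t \<notin> S" for t
    using bnd[of t] that w by auto
  have I1: "(\<integral>\<^sup>+y. indicator A1 y * ker y \<partial>lborel)
      \<le> ennreal ((\<delta> powr p * w powr (-p) + P powr p * (2-\<theta>) powr (-p)) / p)"
    using nn_integral_kernel_rise_right_le[OF S der cont d p w P c1 slope_right(1)]
    by (simp add: A1_def ker_def)
  have I2: "(\<integral>\<^sup>+y. indicator A2 y * ker y \<partial>lborel)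
      \<le> ennreal ((\<delta> powr p * w powr (-p) + Q powr p * (1+\<theta>) powr (-p)) / p)"
    using nn_integral_kernel_rise_right_le[OF S der_minus cont_minus d p w Q c2 slope_right(2)]
    by (simp add: A2_def ker_def)
  have I3: "(\<integral>\<^sup>+y. indicator A3 y * ker y \<partial>lborel)
      \<le> ennreal ((\<delta> powr p * w powr (-p) + Q powr p * (2-\<theta>) powr (-p)) / p)"
    using nn_integral_kernel_rise_left_le[OF S der cont d p w Q c1 slope_left(1)]
    by (simp add: A3_def ker_def)
  have I4: "(\<integral>\<^sup>+y. indicator A4 y * ker y \<partial>lborel)
      \<le> ennreal ((\<delta> powr p * w powr (-p) + P powr p * (1+\<theta>) powr (-p)) / p)"
    using nn_integral_kernel_rise_left_le[OF S der_minus cont_minus d p w P c2 slope_left(2)]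
    by (simp add: A4_def ker_def)
  have "jump_integral \<delta> p (S_floor \<delta> u) x
      \<le> (\<integral>\<^sup>+y. indicator A1 y * ker y + indicator A2 y * ker y + indicator A3 y * ker y
          + indicator A4 y * ker y \<partial>lborel)"
    unfolding jump_integral_def ker_def[symmetric] by (rule nn_integral_mono) (rule split)
  also have "\<dots> = (\<integral>\<^sup>+y. indicator A1 y * ker y \<partial>lborel) + (\<integral>\<^sup>+y. indicator A2 y * ker y \<partial>lborel)
      + (\<integral>\<^sup>+y. indicator A3 y * ker y \<partial>lborel) + (\<integral>\<^sup>+y. indicator A4 y * ker y \<partial>lborel)"
    by (simp add: nn_integral_add)
  also have "\<dots> \<le> ennreal ((\<delta> powr p * w powr (-p) + P powr p * (2-\<theta>) powr (-p)) / p)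
     + ennreal ((\<delta> powr p * w powr (-p) + Q powr p * (1+\<theta>) powr (-p)) / p)
     + ennreal ((\<delta> powr p * w powr (-p) + Q powr p * (2-\<theta>) powr (-p)) / p)
     + ennreal ((\<delta> powr p * w powr (-p) + P powr p * (1+\<theta>) powr (-p)) / p)"
    using I1 I2 I3 I4 by (intro add_mono) auto
  also have "\<dots> = ennreal ((4 * \<delta> powr p * w powr (-p) + (P powr p + Q powr p) * gap_weight p \<theta>) / p)"
    using p by (simp add: ennreal_plus[symmetric] gap_weight_def add_divide_distrib[symmetric]
        algebra_simps del: ennreal_plus)
  finally show ?thesis unfolding \<theta>_def .
qed

lemma nn_integral_jump_integral_cell_le:
  fixes u u' :: "real \<Rightarrow> real"
  assumes S: "finite S" and der: "\<And>x. x \<notin> S \<Longrightarrow> (u has_real_derivative u' x) (at x)"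
    and cont: "continuous_on UNIV u" and d: "\<delta> > 0" and p: "p > 0" and eta: "\<eta> > 0"
    and P: "P \<ge> 0" and Q: "Q \<ge> 0"
    and bnd: "\<And>t. t \<in> {a-\<eta>..a+2*\<eta>} \<Longrightarrow> t \<notin> S \<Longrightarrow> -Q \<le> u' t \<and> u' t \<le> P"
  shows "(\<integral>\<^sup>+x. jump_integral \<delta> p (S_floor \<delta> u) x * indicator {a..<a+\<eta>} x \<partial>lborel)
    \<le> ennreal (4 * \<delta> powr p * \<eta> powr (1-p) / p)
      + ennreal ((P powr p + Q powr p) / p)
        * (\<integral>\<^sup>+x. ennreal (gap_weight p (frac (u x / \<delta>))) * indicator {a..<a+\<eta>} x \<partial>lborel)"
proof -
  note [measurable] = borel_measurable_continuous_onI[OF cont]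
  define e where "e = 4 * \<delta> powr p * \<eta> powr (-p) / p"
  define h where "h x = ennreal (gap_weight p (frac (u x / \<delta>))) * indicator {a..<a+\<eta>} x" for x
  have [measurable]: "h \<in> borel_measurable borel" unfolding h_def gap_weight_def frac_def by measurable
  have "(\<integral>\<^sup>+x. jump_integral \<delta> p (S_floor \<delta> u) x * indicator {a..<a+\<eta>} x \<partial>lborel)
      \<le> (\<integral>\<^sup>+x. ennreal e * indicator {a..<a+\<eta>} x + ennreal ((P powr p + Q powr p) / p) * h x \<partial>lborel)"
  proof (intro nn_integral_mono)
    fix x
    show "jump_integral \<delta> p (S_floor \<delta> u) x * indicator {a..<a+\<eta>} x
      \<le> ennreal e * indicator {a..<a+\<eta>} x + ennreal ((P powr p + Q powr p) / p) * h x"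
    proof (cases "x \<in> {a..<a+\<eta>}")
      case True
      have "jump_integral \<delta> p (S_floor \<delta> u) x
          \<le> ennreal ((4 * \<delta> powr p * \<eta> powr (-p) + (P powr p + Q powr p) * gap_weight p (frac (u x / \<delta>))) / p)"
        using True bnd by (intro jump_integral_S_floor_le[OF S der cont d p eta P Q]) auto
      also have "\<dots> = ennreal (e + (P powr p + Q powr p) * gap_weight p (frac (u x / \<delta>)) / p)"
        by (simp add: e_def add_divide_distrib)
      also have "\<dots> = ennreal e + ennreal ((P powr p + Q powr p) / p) * ennreal (gap_weight p (frac (u x / \<delta>)))"
        using p by (subst ennreal_plus) (auto simp: e_def gap_weight_nonneg ennreal_mult''[symmetric])
      finally show ?thesis using True by (simp add: h_def)
    qed (simp add: h_def)
  qed
  also have "\<dots> = ennreal e * ennreal \<eta> + ennreal ((P powr p + Q powr p) / p) * (\<integral>\<^sup>+x. h x \<partial>lborel)"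
    using eta by (simp add: nn_integral_add nn_integral_cmult)
  also have "ennreal e * ennreal \<eta> = ennreal (e * \<eta>)"
    using p by (intro ennreal_mult'[symmetric]) (simp add: e_def)
  also have "e * \<eta> = 4 * \<delta> powr p * \<eta> powr (1-p) / p"
    using eta by (simp add: e_def powr_diff powr_minus divide_inverse mult_ac)
  finally show ?thesis unfolding h_def .
qed

lemma nn_integral_jump_integral_flat_cell_le:
  fixes u u' :: "real \<Rightarrow> real"
  assumes S: "finite S" and der: "\<And>x. x \<notin> S \<Longrightarrow> (u has_real_derivative u' x) (at x)"
    and cont: "continuous_on UNIV u" and d: "\<delta> > 0" and p: "p > 0" and eta: "\<eta> > 0"
    and M: "M \<ge> 0" and bnd: "\<And>t. t \<in> {a-\<eta>..a+2*\<eta>} \<Longrightarrow> t \<notin> S \<Longrightarrow> \<bar>u' t\<bar> \<le> M"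
  shows "(\<integral>\<^sup>+x. jump_integral \<delta> p (S_floor \<delta> u) x * indicator {a..<a+\<eta>} x \<partial>lborel)
    \<le> ennreal (4 * \<delta> powr p * \<eta> powr (1-p) / p + 4 * M powr p * \<eta> / p)"
proof -
  have "(\<integral>\<^sup>+x. ennreal (gap_weight p (frac (u x / \<delta>))) * indicator {a..<a+\<eta>} x \<partial>lborel)
      \<le> (\<integral>\<^sup>+x. ennreal 2 * indicator {a..<a+\<eta>} x \<partial>lborel)"
  proof (intro nn_integral_mono)
    fix x
    have "ennreal (gap_weight p (frac (u x / \<delta>))) \<le> ennreal 2"
      using gap_weight_frac_le_2 p by (intro ennreal_leI) simp
    then show "ennreal (gap_weight p (frac (u x / \<delta>))) * indicator {a..<a+\<eta>} x
      \<le> ennreal 2 * indicator {a..<a+\<eta>} x"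
      by (simp add: indicator_def)
  qed
  also have "\<dots> = ennreal (2 * \<eta>)"
    using eta by (simp add: nn_integral_cmult_indicator ennreal_mult)
  finally have "ennreal ((M powr p + M powr p) / p)
      * (\<integral>\<^sup>+x. ennreal (gap_weight p (frac (u x / \<delta>))) * indicator {a..<a+\<eta>} x \<partial>lborel)
      \<le> ennreal ((M powr p + M powr p) / p) * ennreal (2 * \<eta>)"
    by (rule mult_left_mono) simp
  also have "\<dots> = ennreal (4 * M powr p * \<eta> / p)"
    using p eta by (simp add: ennreal_mult'[symmetric])
  finally have weight: "ennreal ((M powr p + M powr p) / p)
      * (\<integral>\<^sup>+x. ennreal (gap_weight p (frac (u x / \<delta>))) * indicator {a..<a+\<eta>} x \<partial>lborel)
      \<le> ennreal (4 * M powr p * \<eta> / p)" .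
  have "(\<integral>\<^sup>+x. jump_integral \<delta> p (S_floor \<delta> u) x * indicator {a..<a+\<eta>} x \<partial>lborel)
    \<le> ennreal (4 * \<delta> powr p * \<eta> powr (1-p) / p)
      + ennreal ((M powr p + M powr p) / p)
        * (\<integral>\<^sup>+x. ennreal (gap_weight p (frac (u x / \<delta>))) * indicator {a..<a+\<eta>} x \<partial>lborel)"
  proof (rule nn_integral_jump_integral_cell_le[OF S der cont d p eta M M])
    show "-M \<le> u' t \<and> u' t \<le> M" if "t \<in> {a-\<eta>..a+2*\<eta>}" "t \<notin> S" for t
      using bnd[OF that] by linarith
  qed
  also have "\<dots> \<le> ennreal (4 * \<delta> powr p * \<eta> powr (1-p) / p) + ennreal (4 * M powr p * \<eta> / p)"
    by (rule add_left_mono[OF weight])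
  also have "\<dots> = ennreal (4 * \<delta> powr p * \<eta> powr (1-p) / p + 4 * M powr p * \<eta> / p)"
    using p eta by (intro ennreal_plus[symmetric]) auto
  finally show ?thesis .
qed

lemma steep_slope_estimate:
  fixes C \<tau> \<epsilon> \<eta> \<delta> \<kappa> L p :: real
  assumes kap: "0 < \<kappa>" "\<kappa> \<le> C" "C \<le> L" and eps: "0 < \<epsilon>" "\<epsilon> \<le> 1/2"
    and tau: "0 \<le> \<tau>" "\<tau> \<le> \<epsilon> * C" and eta: "\<eta> > 0" and d: "\<delta> > 0" and p: "p \<ge> 1"
  shows "(C + \<tau>) powr p * (((C + \<tau>) * \<eta> + 2 * \<delta>) / (C - \<tau>))
    \<le> ((1 + \<epsilon>) / (1 - \<epsilon>)) powr (p + 1) * ((C - \<tau>) powr p * \<eta>) + (2 * L) powr p * (4 * \<delta> / \<kappa>)"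
proof -
  have "\<epsilon> * C \<le> 1/2 * C" using eps kap by (intro mult_right_mono) auto
  then have "\<tau> \<le> C / 2" using tau by linarith
  then have ct: "C - \<tau> \<ge> C / 2" and cp: "C + \<tau> \<le> 2 * C" and C: "C > 0" using kap tau by auto
  have ratio: "(C + \<tau>) / (C - \<tau>) \<le> (1 + \<epsilon>) / (1 - \<epsilon>)"
  proof -
    have "(C + \<tau>) * (1 - \<epsilon>) \<le> (1 + \<epsilon>) * (C - \<tau>)" using tau eps by (simp add: algebra_simps)
    then show ?thesis using ct C eps by (simp add: divide_simps)
  qed
  have "(C + \<tau>) powr p * ((C + \<tau>) * \<eta>) / (C - \<tau>) = ((C + \<tau>) / (C - \<tau>)) powr (p + 1) * ((C - \<tau>) powr p * \<eta>)"
    using ct C tau by (simp add: powr_divide powr_add field_simps)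
  also have "\<dots> \<le> ((1 + \<epsilon>) / (1 - \<epsilon>)) powr (p + 1) * ((C - \<tau>) powr p * \<eta>)"
    using ratio ct C tau p eta by (intro mult_right_mono powr_mono2) auto
  finally have main: "(C + \<tau>) powr p * ((C + \<tau>) * \<eta>) / (C - \<tau>)
      \<le> ((1 + \<epsilon>) / (1 - \<epsilon>)) powr (p + 1) * ((C - \<tau>) powr p * \<eta>)" .
  have "(C + \<tau>) powr p \<le> (2 * L) powr p" using cp kap tau p by (intro powr_mono2) auto
  moreover have "2 * \<delta> / (C - \<tau>) \<le> 2 * \<delta> / (\<kappa> / 2)" using ct kap d by (intro frac_le) auto
  then have "2 * \<delta> / (C - \<tau>) \<le> 4 * \<delta> / \<kappa>" by simp
  ultimately have small: "(C + \<tau>) powr p * (2 * \<delta> / (C - \<tau>)) \<le> (2 * L) powr p * (4 * \<delta> / \<kappa>)"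
    using ct C d by (intro mult_mono) auto
  show ?thesis
    using main small by (simp add: add_divide_distrib distrib_left)
qed

lemma nn_integral_gap_weight_steep_le:
  fixes u u' :: "real \<Rightarrow> real"
  assumes p: "p \<ge> 1" and S: "finite S" and der: "\<And>x. x \<notin> S \<Longrightarrow> (u has_real_derivative u' x) (at x)"
    and cu': "continuous_on (-S) u'" and cont: "continuous_on UNIV u"
    and d: "\<delta> > 0" and eta: "\<eta> > 0" and m: "m > 0" and sig: "\<bar>\<sigma>\<bar> = 1"
    and on: "\<And>t. t \<in> {a..a+\<eta>} \<Longrightarrow> t \<notin> S \<and> m \<le> \<sigma> * u' t \<and> \<sigma> * u' t \<le> M"
  shows "(\<integral>\<^sup>+x. ennreal (gap_weight p (frac (u x / \<delta>))) * indicator {a..<a+\<eta>} x \<partial>lborel)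
    \<le> ennreal ((M * \<eta> + 2 * \<delta>) / m * (2 * C_const p))"
proof -
  define g where "g x = \<sigma> * u x / \<delta>" for x
  define g' where "g' x = \<sigma> * u' x / \<delta>" for x
  have "gap_weight p (frac (u x / \<delta>)) = gap_weight p (frac (g x))" for x
    using sig by (cases "\<sigma> = 1") (auto simp: g_def gap_weight_frac_uminus abs_if split: if_splits)
  then have "(\<integral>\<^sup>+x. ennreal (gap_weight p (frac (u x / \<delta>))) * indicator {a..<a+\<eta>} x \<partial>lborel)
      = (\<integral>\<^sup>+x. ennreal (gap_weight p (frac (g x))) * indicator {a..<a+\<eta>} x \<partial>lborel)"
    by simp
  also have "\<dots> \<le> ennreal ((g (a+\<eta>) - g a + 2) / (m / \<delta>) * (2 * C_const p))"
  proof (rule nn_integral_gap_weight_frac_comp_le[OF p])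
    show "(g has_real_derivative g' x) (at x)" if "x \<in> {a..a+\<eta>}" for x
      unfolding g_def g'_def using der[of x] on[OF that] d by (auto intro!: derivative_eq_intros)
    have "{a..a+\<eta>} \<subseteq> -S" using on by auto
    then show "continuous_on {a..a+\<eta>} g'"
      unfolding g'_def using continuous_on_subset[OF cu'] d by (intro continuous_intros) auto
    show "g' x \<ge> m / \<delta>" if "x \<in> {a..a+\<eta>}" for x
      using on[OF that] d by (simp add: g'_def divide_right_mono)
  qed (use eta m d in auto)
  also have "\<dots> \<le> ennreal ((M * \<eta> + 2 * \<delta>) / m * (2 * C_const p))"
  proof (intro ennreal_leI mult_right_mono)
    have "(\<lambda>x. \<sigma> * u x) (a+\<eta>) - (\<lambda>x. \<sigma> * u x) a \<le> M * (a + \<eta> - a)"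
    proof (rule increment_le_of_deriv_le[OF S])
      show "((\<lambda>x. \<sigma> * u x) has_real_derivative \<sigma> * u' x) (at x)" if "x \<notin> S" for x
        using der[OF that] by (auto intro!: derivative_eq_intros)
    qed (use cont eta on in \<open>auto intro: continuous_intros\<close>)
    then have "(\<sigma> * u (a+\<eta>) - \<sigma> * u a + 2 * \<delta>) / m \<le> (M * \<eta> + 2 * \<delta>) / m"
      using m by (intro divide_right_mono) auto
    moreover have "(g (a+\<eta>) - g a + 2) / (m / \<delta>) = (\<sigma> * u (a+\<eta>) - \<sigma> * u a + 2 * \<delta>) / m"
      using d m by (simp add: g_def field_simps)
    ultimately show "(g (a+\<eta>) - g a + 2) / (m / \<delta>) \<le> (M * \<eta> + 2 * \<delta>) / m" by linarith
  qed (use C_const_pos[OF p] in simp)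
  finally show ?thesis .
qed

lemma nn_integral_powr_indicator_ge:
  fixes f :: "real \<Rightarrow> real"
  assumes "a \<le> b" and m: "m \<ge> 0" and p: "p > 0" and bound: "\<And>x. x \<in> {a..<b} \<Longrightarrow> m \<le> \<bar>f x\<bar>"
  shows "ennreal (m powr p * (b - a)) \<le> (\<integral>\<^sup>+x. ennreal (\<bar>f x\<bar> powr p) * indicator {a..<b} x \<partial>lborel)"
proof -
  have "ennreal (m powr p * (b - a)) = (\<integral>\<^sup>+x. ennreal (m powr p) * indicator {a..<b} x \<partial>lborel)"
    using assms(1) by (simp add: nn_integral_cmult_indicator ennreal_mult'')
  also have "\<dots> \<le> (\<integral>\<^sup>+x. ennreal (\<bar>f x\<bar> powr p) * indicator {a..<b} x \<partial>lborel)"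
    using bound m p by (intro nn_integral_mono) (auto simp: indicator_def intro!: ennreal_leI powr_mono2)
  finally show ?thesis .
qed

lemma nn_integral_jump_integral_steep_cell_le:
  fixes u u' :: "real \<Rightarrow> real"
  assumes p: "p \<ge> 1" and S: "finite S" and der: "\<And>x. x \<notin> S \<Longrightarrow> (u has_real_derivative u' x) (at x)"
    and cu': "continuous_on (-S) u'" and cont: "continuous_on UNIV u"
    and d: "\<delta> > 0" and eta: "\<eta> > 0" and eps: "0 < \<epsilon>" "\<epsilon> \<le> 1/2"
    and kap: "0 < \<kappa>" "\<kappa> \<le> \<bar>c\<bar>" "\<bar>c\<bar> \<le> L"
    and near_c: "\<And>t. t \<in> {a-\<eta>..a+2*\<eta>} \<Longrightarrow> t \<notin> S \<and> \<bar>u' t - c\<bar> \<le> \<epsilon> * \<bar>c\<bar>"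
  shows "(\<integral>\<^sup>+x. jump_integral \<delta> p (S_floor \<delta> u) x * indicator {a..<a+\<eta>} x \<partial>lborel)
    \<le> ennreal (4 * \<delta> powr p * \<eta> powr (1-p) / p + 2 * C_const p / p * ((2 * L) powr p * (4 * \<delta> / \<kappa>)))
      + ennreal (2 * C_const p / p * ((1 + \<epsilon>) / (1 - \<epsilon>)) powr (p + 1))
        * (\<integral>\<^sup>+x. ennreal (\<bar>u' x\<bar> powr p) * indicator {a..<a+\<eta>} x \<partial>lborel)"
proof -
  have p0: "p > 0" using p by simp
  define \<tau> where "\<tau> = \<epsilon> * \<bar>c\<bar>"
  define \<sigma> where "\<sigma> = sgn c"
  define m where "m = \<bar>c\<bar> - \<tau>"
  define M where "M = \<bar>c\<bar> + \<tau>"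
  have "\<epsilon> * \<bar>c\<bar> \<le> 1/2 * \<bar>c\<bar>" using eps by (intro mult_right_mono) auto
  then have tau: "0 \<le> \<tau>" "\<tau> \<le> \<bar>c\<bar> / 2" using eps by (auto simp: \<tau>_def)
  have m: "m > 0" and M: "M \<ge> 0" using tau kap by (auto simp: m_def M_def)
  have sig: "\<bar>\<sigma>\<bar> = 1" "\<sigma> * c = \<bar>c\<bar>" using kap by (auto simp: \<sigma>_def sgn_if abs_if)
  have slope: "t \<notin> S \<and> m \<le> \<sigma> * u' t \<and> \<sigma> * u' t \<le> M" if "t \<in> {a-\<eta>..a+2*\<eta>}" for t
  proof -
    have "\<sigma> * u' t - \<bar>c\<bar> = \<sigma> * (u' t - c)" using sig(2) by (simp add: right_diff_distrib)
    then have "\<bar>\<sigma> * u' t - \<bar>c\<bar>\<bar> \<le> \<tau>" using near_c[OF that] sig(1) by (simp add: \<tau>_def abs_mult)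
    then show ?thesis using near_c[OF that] by (auto simp: m_def M_def)
  qed
  define P where "P = (if c > 0 then M else 0)"
  define Q where "Q = (if c > 0 then 0 else M)"
  have PQ: "P powr p + Q powr p = M powr p" "P \<ge> 0" "Q \<ge> 0" using M by (auto simp: P_def Q_def)
  have "m \<le> \<bar>u' x\<bar>" if "x \<in> {a..<a+\<eta>}" for x
    using slope[of x] that sig(1) eta abs_ge_self[of "\<sigma> * u' x"] by (auto simp: abs_mult)
  then have mass: "ennreal (m powr p * \<eta>) \<le> (\<integral>\<^sup>+x. ennreal (\<bar>u' x\<bar> powr p) * indicator {a..<a+\<eta>} x \<partial>lborel)"
    using nn_integral_powr_indicator_ge[where a=a and b="a+\<eta>" and m=m and p=p and f=u'] m p0 eta by simp
  have "(\<integral>\<^sup>+x. jump_integral \<delta> p (S_floor \<delta> u) x * indicator {a..<a+\<eta>} x \<partial>lborel)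
    \<le> ennreal (4 * \<delta> powr p * \<eta> powr (1-p) / p)
      + ennreal (M powr p / p)
        * (\<integral>\<^sup>+x. ennreal (gap_weight p (frac (u x / \<delta>))) * indicator {a..<a+\<eta>} x \<partial>lborel)"
  proof (rule nn_integral_jump_integral_cell_le[OF S der cont d p0 eta PQ(2,3), unfolded PQ(1)])
    show "- Q \<le> u' t \<and> u' t \<le> P" if "t \<in> {a-\<eta>..a+2*\<eta>}" for t
      using slope[OF that] m kap by (auto simp: P_def Q_def \<sigma>_def sgn_if split: if_splits)
  qed
  also have "\<dots> \<le> ennreal (4 * \<delta> powr p * \<eta> powr (1-p) / p)
      + ennreal (M powr p / p) * ennreal ((M * \<eta> + 2 * \<delta>) / m * (2 * C_const p))"
    using slope eta
    by (intro add_left_mono mult_left_mono nn_integral_gap_weight_steep_le[OF p S der cu' cont d eta m sig(1)])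
       auto
  also have "ennreal (M powr p / p) * ennreal ((M * \<eta> + 2 * \<delta>) / m * (2 * C_const p))
      = ennreal (2 * C_const p / p * (M powr p * ((M * \<eta> + 2 * \<delta>) / m)))"
    using p0 by (simp add: ennreal_mult'[symmetric] mult_ac)
  also have "\<dots> \<le> ennreal (2 * C_const p / p * (((1 + \<epsilon>) / (1 - \<epsilon>)) powr (p + 1) * (m powr p * \<eta>)
      + (2 * L) powr p * (4 * \<delta> / \<kappa>)))"
  proof (intro ennreal_leI mult_left_mono)
    show "M powr p * ((M * \<eta> + 2 * \<delta>) / m)
      \<le> ((1 + \<epsilon>) / (1 - \<epsilon>)) powr (p + 1) * (m powr p * \<eta>) + (2 * L) powr p * (4 * \<delta> / \<kappa>)"
      unfolding M_def m_def by (rule steep_slope_estimate[OF kap eps tau(1) _ eta d p]) (simp add: \<tau>_def)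
  qed (use C_const_pos[OF p] p0 in simp)
  also have "\<dots> = ennreal (2 * C_const p / p * ((2 * L) powr p * (4 * \<delta> / \<kappa>))
      + 2 * C_const p / p * ((1 + \<epsilon>) / (1 - \<epsilon>)) powr (p + 1) * (m powr p * \<eta>))"
    by (simp add: ring_distribs add.commute mult.assoc)
  also have "\<dots> = ennreal (2 * C_const p / p * ((2 * L) powr p * (4 * \<delta> / \<kappa>)))
      + ennreal (2 * C_const p / p * ((1 + \<epsilon>) / (1 - \<epsilon>)) powr (p + 1) * (m powr p * \<eta>))"
    using C_const_pos[OF p] p0 d kap eta by (intro ennreal_plus) auto
  also have "\<dots> = ennreal (2 * C_const p / p * ((2 * L) powr p * (4 * \<delta> / \<kappa>)))
      + ennreal (2 * C_const p / p * ((1 + \<epsilon>) / (1 - \<epsilon>)) powr (p + 1)) * ennreal (m powr p * \<eta>)"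
    using C_const_pos[OF p] p0 by (subst ennreal_mult') auto
  also have "\<dots> \<le> ennreal (2 * C_const p / p * ((2 * L) powr p * (4 * \<delta> / \<kappa>)))
      + ennreal (2 * C_const p / p * ((1 + \<epsilon>) / (1 - \<epsilon>)) powr (p + 1))
        * (\<integral>\<^sup>+x. ennreal (\<bar>u' x\<bar> powr p) * indicator {a..<a+\<eta>} x \<partial>lborel)"
    by (intro add_left_mono mult_left_mono mass) simp
  finally show ?thesis
    using C_const_pos[OF p] p0 d kap eta by (simp add: ennreal_plus add.assoc)
qed

lemma sum_indicator_grid_cells:
  fixes A0 \<eta> :: real
  assumes "\<eta> > 0"
  shows "(\<Sum>i<n. indicator {A0 + real i * \<eta>..<A0 + real i * \<eta> + \<eta>} x :: 'a::{comm_monoid_add,zero_neq_one})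
    = indicator {A0..<A0 + real n * \<eta>} x"
proof (induction n)
  case (Suc n)
  have "A0 \<le> A0 + real n * \<eta>" "A0 + real n * \<eta> \<le> A0 + real n * \<eta> + \<eta>" using assms by auto
  then have "{A0..<A0 + real n * \<eta>} \<union> {A0 + real n * \<eta>..<A0 + real n * \<eta> + \<eta>} = {A0..<A0 + real (Suc n) * \<eta>}"
    by (subst ivl_disj_un_two(3)) (simp_all add: algebra_simps)
  moreover have "{A0..<A0 + real n * \<eta>} \<inter> {A0 + real n * \<eta>..<A0 + real n * \<eta> + \<eta>} = {}"
    by auto
  ultimately show ?case using Suc by (simp add: indicator_add)
qed simp

lemma nn_integral_split_grid_cells:
  fixes f :: "real \<Rightarrow> ennreal"
  assumes [measurable]: "f \<in> borel_measurable borel" and eta: "\<eta> > 0"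
  shows "(\<integral>\<^sup>+x. f x \<partial>lborel)
    = (\<Sum>i<n. \<integral>\<^sup>+x. f x * indicator {A0 + real i * \<eta>..<A0 + real i * \<eta> + \<eta>} x \<partial>lborel)
      + (\<integral>\<^sup>+x. f x * indicator (- {A0..<A0 + real n * \<eta>}) x \<partial>lborel)"
proof -
  have "(\<integral>\<^sup>+x. f x \<partial>lborel) = (\<integral>\<^sup>+x. (\<Sum>i<n. f x * indicator {A0 + real i * \<eta>..<A0 + real i * \<eta> + \<eta>} x)
      + f x * indicator (- {A0..<A0 + real n * \<eta>}) x \<partial>lborel)"
  proof (intro nn_integral_cong)
    fix x
    show "f x = (\<Sum>i<n. f x * indicator {A0 + real i * \<eta>..<A0 + real i * \<eta> + \<eta>} x)
      + f x * indicator (- {A0..<A0 + real n * \<eta>}) x"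
      by (simp only: sum_indicator_grid_cells[OF eta] flip: sum_distrib_left) (simp split: split_indicator)
  qed
  also have "\<dots> = (\<integral>\<^sup>+x. (\<Sum>i<n. f x * indicator {A0 + real i * \<eta>..<A0 + real i * \<eta> + \<eta>} x) \<partial>lborel)
      + (\<integral>\<^sup>+x. f x * indicator (- {A0..<A0 + real n * \<eta>}) x \<partial>lborel)"
    by (rule nn_integral_add) auto
  also have "(\<integral>\<^sup>+x. (\<Sum>i<n. f x * indicator {A0 + real i * \<eta>..<A0 + real i * \<eta> + \<eta>} x) \<partial>lborel)
      = (\<Sum>i<n. \<integral>\<^sup>+x. f x * indicator {A0 + real i * \<eta>..<A0 + real i * \<eta> + \<eta>} x \<partial>lborel)"
    by (rule nn_integral_sum) auto
  finally show ?thesis .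
qed

lemma card_grid_points_near_le:
  fixes A0 \<eta> s r :: real
  assumes eta: "\<eta> > 0" and r: "r \<ge> 0"
  shows "real (card {i\<in>{..<n}. \<bar>A0 + real i * \<eta> - s\<bar> \<le> r}) \<le> 2 * r / \<eta> + 1"
proof -
  define lo where "lo = \<lceil>(s - r - A0) / \<eta>\<rceil>"
  define hi where "hi = \<lfloor>(s + r - A0) / \<eta>\<rfloor>"
  have "int ` {i\<in>{..<n}. \<bar>A0 + real i * \<eta> - s\<bar> \<le> r} \<subseteq> {lo..hi}"
  proof
    fix j assume "j \<in> int ` {i\<in>{..<n}. \<bar>A0 + real i * \<eta> - s\<bar> \<le> r}"
    then obtain i where i: "\<bar>A0 + real i * \<eta> - s\<bar> \<le> r" "j = int i" by auto
    then have "(s - r - A0) / \<eta> \<le> real i" "real i \<le> (s + r - A0) / \<eta>"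
      using eta by (auto simp: field_simps)
    then show "j \<in> {lo..hi}" using i by (auto simp: lo_def hi_def ceiling_le_iff le_floor_iff)
  qed
  then have "card (int ` {i\<in>{..<n}. \<bar>A0 + real i * \<eta> - s\<bar> \<le> r}) \<le> card {lo..hi}"
    by (intro card_mono) simp_all
  then have "card {i\<in>{..<n}. \<bar>A0 + real i * \<eta> - s\<bar> \<le> r} \<le> card {lo..hi}"
    by (simp add: card_image)
  moreover have "real (card {lo..hi}) \<le> 2 * r / \<eta> + 1"
  proof (cases "lo \<le> hi")
    case True
    have "real_of_int hi \<le> (s + r - A0) / \<eta>" "(s - r - A0) / \<eta> \<le> real_of_int lo"
      by (simp_all add: hi_def lo_def)
    then have "real (card {lo..hi}) \<le> (s + r - A0) / \<eta> - (s - r - A0) / \<eta> + 1"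
      using True by simp
    also have "\<dots> = 2 * r / \<eta> + 1" by (simp add: diff_divide_distrib[symmetric])
    finally show ?thesis .
  qed (use eta r in simp)
  ultimately show ?thesis by linarith
qed

lemma card_grid_points_near_finite_le:
  fixes A0 \<eta> r :: real
  assumes S: "finite S" and eta: "\<eta> > 0" and r: "r \<ge> 0"
  shows "real (card {i\<in>{..<n}. \<exists>s\<in>S. \<bar>A0 + real i * \<eta> - s\<bar> \<le> r}) \<le> real (card S) * (2 * r / \<eta> + 1)"
proof -
  have "{i\<in>{..<n}. \<exists>s\<in>S. \<bar>A0 + real i * \<eta> - s\<bar> \<le> r} = (\<Union>s\<in>S. {i\<in>{..<n}. \<bar>A0 + real i * \<eta> - s\<bar> \<le> r})"
    by auto
  then have "card {i\<in>{..<n}. \<exists>s\<in>S. \<bar>A0 + real i * \<eta> - s\<bar> \<le> r}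
      \<le> (\<Sum>s\<in>S. card {i\<in>{..<n}. \<bar>A0 + real i * \<eta> - s\<bar> \<le> r})"
    using card_UN_le[OF S] by simp
  then have "real (card {i\<in>{..<n}. \<exists>s\<in>S. \<bar>A0 + real i * \<eta> - s\<bar> \<le> r})
      \<le> (\<Sum>s\<in>S. real (card {i\<in>{..<n}. \<bar>A0 + real i * \<eta> - s\<bar> \<le> r}))"
    by (simp flip: of_nat_sum)
  also have "\<dots> \<le> (\<Sum>s\<in>S. 2 * r / \<eta> + 1)"
    by (intro sum_mono card_grid_points_near_le[OF eta r])
  finally show ?thesis by simp
qed

lemma abs_deriv_le_of_lipschitz:
  fixes u :: "real \<Rightarrow> real"
  assumes L: "L-lipschitz_on UNIV u" and d: "(u has_real_derivative D) (at x)"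
  shows "\<bar>D\<bar> \<le> L"
proof -
  have "((\<lambda>h. \<bar>(u (x + h) - u x) / h\<bar>) \<longlongrightarrow> \<bar>D\<bar>) (at 0)"
    using d by (intro tendsto_rabs) (simp add: DERIV_def)
  moreover have "\<forall>\<^sub>F h in at 0. \<bar>(u (x + h) - u x) / h\<bar> \<le> L"
  proof (rule eventually_at_filter[THEN iffD2], rule always_eventually, intro allI impI)
    fix h :: real assume "h \<noteq> 0"
    have "\<bar>u (x + h) - u x\<bar> \<le> L * \<bar>h\<bar>"
      using L unfolding lipschitz_on_def dist_real_def by (metis UNIV_I add_diff_cancel_left')
    then show "\<bar>(u (x + h) - u x) / h\<bar> \<le> L" using \<open>h \<noteq> 0\<close> by (simp add: abs_divide divide_le_eq)
  qed
  ultimately show ?thesis by (rule tendsto_upperbound) simp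
qed

lemma uniformly_continuous_on_off_finite:
  fixes f :: "real \<Rightarrow> real"
  assumes S: "finite S" and f: "continuous_on (- S) f" and rho: "\<rho> > 0" and tol: "\<tau> > 0"
  obtains d where "d > 0" "\<And>t t'. \<bar>t\<bar> \<le> M \<Longrightarrow> (\<forall>s\<in>S. \<rho> < \<bar>t - s\<bar>) \<Longrightarrow> \<bar>t'\<bar> \<le> M \<Longrightarrow> (\<forall>s\<in>S. \<rho> < \<bar>t' - s\<bar>)
      \<Longrightarrow> \<bar>t - t'\<bar> < d \<Longrightarrow> \<bar>f t - f t'\<bar> \<le> \<tau>"
proof -
  define K where "K = {t. \<bar>t\<bar> \<le> M} \<inter> (\<Inter>s\<in>S. {t. \<rho> \<le> \<bar>t - s\<bar>})"
  have "closed K" unfolding K_def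
    by (intro closed_Int closed_INT allI ballI closed_Collect_le continuous_intros)
  moreover have "bounded K" unfolding K_def bounded_iff by (rule exI[of _ M]) auto
  ultimately have "compact K" by (simp add: compact_eq_bounded_closed)
  moreover have "K \<subseteq> - S" using rho by (force simp: K_def)
  ultimately have "uniformly_continuous_on K f"
    by (intro compact_uniformly_continuous continuous_on_subset[OF f])
  then obtain d where d: "d > 0" "\<And>t t'. t \<in> K \<Longrightarrow> t' \<in> K \<Longrightarrow> dist t' t < d \<Longrightarrow> dist (f t') (f t) < \<tau>"
    using tol unfolding uniformly_continuous_on_def by metis
  show ?thesis
  proof (rule that[OF d(1)])
    fix t t' assume t: "\<bar>t\<bar> \<le> M" "\<forall>s\<in>S. \<rho> < \<bar>t - s\<bar>" "\<bar>t'\<bar> \<le> M" "\<forall>s\<in>S. \<rho> < \<bar>t' - s\<bar>" "\<bar>t - t'\<bar> < d"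
    then have "t \<in> K" "t' \<in> K" by (auto simp: K_def less_imp_le)
    then have "dist (f t) (f t') < \<tau>" using d(2)[of t' t] t(5) by (simp add: dist_real_def)
    then show "\<bar>f t - f t'\<bar> \<le> \<tau>" by (simp add: dist_real_def)
  qed
qed

lemma exists_slope_tolerance:
  fixes K J p e :: real
  assumes "e > 0"
  obtains \<epsilon> where "0 < \<epsilon>" "\<epsilon> \<le> 1/2" "K * ((1 + \<epsilon>) / (1 - \<epsilon>)) powr (p + 1) * J \<le> K * J + e"
proof -
  have "((\<lambda>\<epsilon>::real. K * ((1 + \<epsilon>) / (1 - \<epsilon>)) powr (p + 1) * J) \<longlongrightarrow> K * ((1 + 0) / (1 - 0)) powr (p + 1) * J) (at_right 0)"
    by (intro tendsto_intros) auto
  then have "\<forall>\<^sub>F \<epsilon> in at_right 0. K * ((1 + \<epsilon>) / (1 - \<epsilon>)) powr (p + 1) * J < K * J + e"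
    using assms by (intro order_tendstoD) auto
  moreover have "\<forall>\<^sub>F \<epsilon> in at_right (0::real). 0 < \<epsilon> \<and> \<epsilon> \<le> 1/2"
    unfolding eventually_at_right_field by (intro exI[of _ "1/2"]) auto
  ultimately have "\<forall>\<^sub>F \<epsilon> in at_right (0::real).
      0 < \<epsilon> \<and> \<epsilon> \<le> 1/2 \<and> K * ((1 + \<epsilon>) / (1 - \<epsilon>)) powr (p + 1) * J < K * J + e"
    by eventually_elim auto
  then obtain \<epsilon> where "0 < \<epsilon>" "\<epsilon> \<le> 1/2" "K * ((1 + \<epsilon>) / (1 - \<epsilon>)) powr (p + 1) * J < K * J + e"
    using eventually_happens'[OF trivial_limit_at_right_real] by blast
  then show ?thesis using that by simp
qed

lemma exists_grid_size:
  fixes R \<eta> :: real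
  assumes R: "R \<ge> 0" and eta: "0 < \<eta>" "\<eta> \<le> 1/2"
  obtains n :: nat where "R + 1 < -R-1 + real n * \<eta>" "-R-1 + real n * \<eta> \<le> R + 2"
proof
  define n where "n = nat \<lceil>(2*R+2) / \<eta>\<rceil> + 1"
  have "(2*R+2) / \<eta> + 1 \<le> real n" "real n \<le> (2*R+2) / \<eta> + 2"
    using R eta by (simp_all add: n_def) linarith+
  then have "real n * \<eta> \<ge> 2*R+2+\<eta>" "real n * \<eta> \<le> 2*R+2+2*\<eta>"
    using eta by (simp_all add: field_simps)
  then show "R + 1 < -R-1 + real n * \<eta>" "-R-1 + real n * \<eta> \<le> R + 2"
    using eta by auto
qed

subsection \<open>Compactly supported piecewise \<open>C\<^sup>1\<close> functions\<close>

locale compact_piecewise_C1 =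
  fixes u u' :: "real \<Rightarrow> real" and S :: "real set" and p L R :: real
  assumes p: "p \<ge> 1" and finite_S: "finite S"
    and deriv: "\<And>x. x \<notin> S \<Longrightarrow> (u has_real_derivative u' x) (at x)"
    and continuous_deriv: "continuous_on (- S) u'"
    and continuous: "continuous_on UNIV u"
    and deriv_bound: "\<And>x. x \<notin> S \<Longrightarrow> \<bar>u' x\<bar> \<le> L" and L: "L \<ge> 1"
    and support: "\<And>x. u x \<noteq> 0 \<Longrightarrow> \<bar>x\<bar> \<le> R" and R: "R > 0"
begin

lemma p_pos: "p > 0"
  using p by simp

lemma borel_measurable_u [measurable]: "u \<in> borel_measurable borel"
  by (rule borel_measurable_continuous_onI[OF continuous])

lemma borel_measurable_deriv [measurable]: "u' \<in> borel_measurable borel"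
proof -
  have "(\<lambda>x. if x \<in> -S then u' x else u' x) \<in> borel_measurable borel"
    using finite_S continuous_deriv
    by (intro borel_measurable_continuous_on_if) (auto simp: continuous_on_finite finite_imp_closed)
  then show ?thesis by simp
qed

lemma jump_integral_outside_support_le:
  assumes d: "\<delta> > 0" and x: "\<bar>x\<bar> \<ge> R + 1"
  shows "jump_integral \<delta> p (S_floor \<delta> u) x \<le> ennreal (2 * R * \<delta> powr p * (\<bar>x\<bar> - R) powr (-1-p))"
proof -
  have ux: "u x = 0" using support[of x] x R by force
  define K where "K = \<delta> powr p * (\<bar>x\<bar> - R) powr (-1-p)"
  have "jump_integral \<delta> p (S_floor \<delta> u) x \<le> (\<integral>\<^sup>+y. ennreal K * indicator {-R..R} y \<partial>lborel)"
    unfolding jump_integral_def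
  proof (intro nn_integral_mono)
    fix y
    show "indicator {y. \<delta> < \<bar>S_floor \<delta> u y - S_floor \<delta> u x\<bar>} y * ennreal (\<delta> powr p / \<bar>y - x\<bar> powr (1 + p))
       \<le> ennreal K * indicator {-R..R} y"
    proof (cases "\<delta> < \<bar>S_floor \<delta> u y - S_floor \<delta> u x\<bar>")
      case True
      then have "u y \<noteq> 0" using ux d by (auto simp: S_floor_def)
      then have y: "\<bar>y\<bar> \<le> R" by (rule support)
      then have "\<bar>x\<bar> - R \<le> \<bar>y - x\<bar>" by linarith
      then have "\<delta> powr p / \<bar>y - x\<bar> powr (1 + p) \<le> \<delta> powr p / (\<bar>x\<bar> - R) powr (1 + p)"
        using x p_pos by (intro divide_left_mono powr_mono2 mult_pos_pos) auto
      also have "\<dots> = K"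
        unfolding K_def using powr_minus[of "\<bar>x\<bar> - R" "1+p"] by (simp add: divide_inverse)
      finally show ?thesis using True y by (auto simp: indicator_def intro!: ennreal_leI)
    qed simp
  qed
  also have "\<dots> = ennreal K * ennreal (2 * R)"
    using R by (simp add: nn_integral_cmult_indicator)
  also have "\<dots> = ennreal (2 * R * \<delta> powr p * (\<bar>x\<bar> - R) powr (-1-p))"
    using R by (simp add: K_def ennreal_mult'[symmetric] mult_ac)
  finally show ?thesis .
qed

lemma nn_integral_jump_integral_outside_support_le:
  assumes d: "\<delta> > 0"
  shows "(\<integral>\<^sup>+x. jump_integral \<delta> p (S_floor \<delta> u) x * indicator (- {-R-1<..<R+1}) x \<partial>lborel)
    \<le> ennreal (4 * R * \<delta> powr p / p)"
proof -
  define c where "c = 2 * R * \<delta> powr p"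
  have c: "c \<ge> 0" using R by (simp add: c_def)
  have "(\<integral>\<^sup>+x. jump_integral \<delta> p (S_floor \<delta> u) x * indicator (- {-R-1<..<R+1}) x \<partial>lborel)
    \<le> (\<integral>\<^sup>+x. ennreal c * (indicator {R+1..} x * ennreal ((x-R) powr (-1-p)))
          + ennreal c * (indicator {..-R-1} x * ennreal ((-R-x) powr (-1-p))) \<partial>lborel)"
  proof (intro nn_integral_mono)
    fix x
    show "jump_integral \<delta> p (S_floor \<delta> u) x * indicator (- {-R-1<..<R+1}) x
      \<le> ennreal c * (indicator {R+1..} x * ennreal ((x-R) powr (-1-p)))
        + ennreal c * (indicator {..-R-1} x * ennreal ((-R-x) powr (-1-p)))"
    proof (cases "x \<in> {-R-1<..<R+1}")
      case False
      then have x: "\<bar>x\<bar> \<ge> R + 1" by auto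
      then consider "x \<ge> R+1" | "x \<le> -R-1" by linarith
      then show ?thesis
      proof cases
        case 1
        then have "\<bar>x\<bar> - R = x-R" using R by simp
        then have "jump_integral \<delta> p (S_floor \<delta> u) x \<le> ennreal (c * (x-R) powr (-1-p))"
          using jump_integral_outside_support_le[OF d x] by (simp add: c_def mult.assoc)
        then show ?thesis using 1 False c R by (simp add: ennreal_mult)
      next
        case 2
        then have "\<bar>x\<bar> - R = -R-x" using R by simp
        from jump_integral_outside_support_le[OF d x, unfolded this]
        have "jump_integral \<delta> p (S_floor \<delta> u) x \<le> ennreal (c * (-R-x) powr (-1-p))"
          by (simp add: c_def mult.assoc)
        then show ?thesis using 2 False c R by (simp add: ennreal_mult)
      qed
    qed simp
  qed
  also have "\<dots> = ennreal c * (\<integral>\<^sup>+x. indicator {R+1..} x * ennreal ((x-R) powr (-1-p)) \<partial>lborel)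
      + ennreal c * (\<integral>\<^sup>+x. indicator {..-R-1} x * ennreal ((-R-x) powr (-1-p)) \<partial>lborel)"
    by (simp add: nn_integral_add nn_integral_cmult)
  also have "\<dots> = ennreal c * ennreal (1/p) + ennreal c * ennreal (1/p)"
    using nn_integral_powr_tail_right[of 1 p R] nn_integral_powr_tail_left[of 1 p "-R"] p_pos by simp
  also have "\<dots> = ennreal (4 * R * \<delta> powr p / p)"
    using c p_pos by (simp add: c_def ennreal_mult'[symmetric] ennreal_plus[symmetric] del: ennreal_plus)
  finally show ?thesis .
qed


lemma nn_integral_jump_integral_grid_cell_le:
  assumes eta: "0 < \<eta>" "\<eta> \<le> 1" and rho: "\<rho> > 0" and kap: "\<kappa> > 0"
    and eps: "0 < \<epsilon>" "\<epsilon> \<le> 1/2" and d: "\<delta> > 0" and a: "-R-1 \<le> a" "a + \<eta> \<le> R + 2"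
    and osc: "\<And>t t'. \<bar>t\<bar> \<le> R+3 \<Longrightarrow> (\<forall>s\<in>S. \<rho> < \<bar>t - s\<bar>) \<Longrightarrow> \<bar>t'\<bar> \<le> R+3 \<Longrightarrow> (\<forall>s\<in>S. \<rho> < \<bar>t' - s\<bar>)
       \<Longrightarrow> \<bar>t - t'\<bar> < 3*\<eta> \<Longrightarrow> \<bar>u' t - u' t'\<bar> \<le> \<epsilon>*\<kappa>"
  shows "(\<integral>\<^sup>+x. jump_integral \<delta> p (S_floor \<delta> u) x * indicator {a..<a+\<eta>} x \<partial>lborel)
    \<le> ennreal (4 * \<delta> powr p * \<eta> powr (1-p) / p + 2 * C_const p / p * ((2 * L) powr p * (4 * \<delta> / \<kappa>))
        + 4 * (2 * \<kappa>) powr p * \<eta> / p + (if \<exists>s\<in>S. \<bar>a - s\<bar> \<le> \<rho> + 2*\<eta> then 4 * L powr p * \<eta> / p else 0))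
      + ennreal (2 * C_const p / p * ((1 + \<epsilon>) / (1 - \<epsilon>)) powr (p + 1))
        * (\<integral>\<^sup>+x. ennreal (\<bar>u' x\<bar> powr p) * indicator {a..<a+\<eta>} x \<partial>lborel)"
    (is "?I \<le> ennreal (?e0 + ?eG + ?eF + ?eN) + ?X")
proof -
  note cell = finite_S deriv continuous d p_pos eta(1)
  have Cp: "C_const p > 0" by (rule C_const_pos[OF p])
  have nonneg: "?e0 \<ge> 0" "?eG \<ge> 0" "?eF \<ge> 0" "?eN \<ge> 0" "?e0 + ?eG \<ge> 0"
    using Cp p_pos d kap eta by auto
  txt \<open>Near \<open>S\<close> only the Lipschitz bound is available; away from \<open>S\<close>, \<open>u'\<close> stays within
    \<open>\<epsilon> \<kappa>\<close> of \<open>u' a\<close> on the window, so the cell is flat if \<open>|u' a| < \<kappa>\<close> and steep otherwise.\<close>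
  show ?thesis
  proof (cases "\<exists>s\<in>S. \<bar>a - s\<bar> \<le> \<rho> + 2*\<eta>")
    case True
    have "?I \<le> ennreal (?e0 + 4 * L powr p * \<eta> / p)"
      using deriv_bound L by (intro nn_integral_jump_integral_flat_cell_le[OF cell]) auto
    also have "\<dots> \<le> ennreal (?e0 + ?eG + ?eF + ?eN)"
      using True nonneg by (intro ennreal_leI) auto
    finally show ?thesis by (simp add: add_increasing2)
  next
    case far: False
    have window: "\<bar>t\<bar> \<le> R+3 \<and> (\<forall>s\<in>S. \<rho> < \<bar>t - s\<bar>) \<and> \<bar>t - a\<bar> < 3*\<eta>" if "t \<in> {a-\<eta>..a+2*\<eta>}" for t
      using that far a eta by force
    have "a \<in> {a-\<eta>..a+2*\<eta>}" using eta by simp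
    note a_window = window[OF this]
    have a_S: "a \<notin> S" using a_window rho by force
    have near_c: "t \<notin> S \<and> \<bar>u' t - u' a\<bar> \<le> \<epsilon> * \<kappa>" if "t \<in> {a-\<eta>..a+2*\<eta>}" for t
      using osc window[OF that] a_window rho by force
    show ?thesis
    proof (cases "\<bar>u' a\<bar> < \<kappa>")
      case True
      have "\<epsilon> * \<kappa> \<le> \<kappa>" using eps kap by simp
      then have "\<bar>u' t\<bar> \<le> 2 * \<kappa>" if "t \<in> {a-\<eta>..a+2*\<eta>}" for t
        using near_c[OF that] True by linarith
      then have "?I \<le> ennreal (?e0 + 4 * (2 * \<kappa>) powr p * \<eta> / p)"
        using kap by (intro nn_integral_jump_integral_flat_cell_le[OF cell]) auto
      also have "\<dots> \<le> ennreal (?e0 + ?eG + ?eF + ?eN)"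
        using nonneg by (intro ennreal_leI) auto
      finally show ?thesis by (simp add: add_increasing2)
    next
      case False
      have "\<epsilon> * \<kappa> \<le> \<epsilon> * \<bar>u' a\<bar>" using False eps by simp
      then have "t \<notin> S \<and> \<bar>u' t - u' a\<bar> \<le> \<epsilon> * \<bar>u' a\<bar>" if "t \<in> {a-\<eta>..a+2*\<eta>}" for t
        using near_c[OF that] by linarith
      then have "?I \<le> ennreal (?e0 + ?eG) + ?X"
        using False deriv_bound[OF a_S] kap eps
        by (intro nn_integral_jump_integral_steep_cell_le[OF p finite_S deriv continuous_deriv continuous d eta(1)])
          (auto simp: not_less)
      also have "\<dots> \<le> ennreal (?e0 + ?eG + ?eF + ?eN) + ?X"
        using nonneg by (intro add_right_mono ennreal_leI) auto
      finally show ?thesis .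
    qed
  qed
qed


lemma Lambda_S_floor_le_grid_sum:
  fixes n :: nat
  assumes eta: "0 < \<eta>" "\<eta> \<le> 1" and rho: "\<rho> > 0" and kap: "\<kappa> > 0"
    and eps: "0 < \<epsilon>" "\<epsilon> \<le> 1/2" and d: "\<delta> > 0"
    and n: "R + 1 < -R-1 + real n * \<eta>" "-R-1 + real n * \<eta> \<le> R + 2"
    and osc: "\<And>t t'. \<bar>t\<bar> \<le> R+3 \<Longrightarrow> (\<forall>s\<in>S. \<rho> < \<bar>t - s\<bar>) \<Longrightarrow> \<bar>t'\<bar> \<le> R+3 \<Longrightarrow> (\<forall>s\<in>S. \<rho> < \<bar>t' - s\<bar>)
       \<Longrightarrow> \<bar>t - t'\<bar> < 3*\<eta> \<Longrightarrow> \<bar>u' t - u' t'\<bar> \<le> \<epsilon>*\<kappa>"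
  shows "Lambda \<delta> p (S_floor \<delta> u)
    \<le> ennreal (4 * R * \<delta> powr p / p
        + real n * (4 * \<delta> powr p * \<eta> powr (1-p) / p + 2 * C_const p / p * ((2 * L) powr p * (4 * \<delta> / \<kappa>))
          + 4 * (2 * \<kappa>) powr p * \<eta> / p)
        + real (card S) * (2 * (\<rho> + 2*\<eta>) / \<eta> + 1) * (4 * L powr p * \<eta> / p))
      + ennreal (2 * C_const p / p * ((1 + \<epsilon>) / (1 - \<epsilon>)) powr (p + 1)) * (\<integral>\<^sup>+x. ennreal (\<bar>u' x\<bar> powr p) \<partial>lborel)"
proof -
  define A0 where "A0 = -R-1"
  define a where "a i = A0 + real i * \<eta>" for i
  define cell where "cell i = {a i..<a i + \<eta>}" for i
  define Cov where "Cov = {A0..<A0 + real n * \<eta>}"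
  define J where "J = jump_integral \<delta> p (S_floor \<delta> u)"
  define e where "e = 4 * \<delta> powr p * \<eta> powr (1-p) / p + 2 * C_const p / p * ((2 * L) powr p * (4 * \<delta> / \<kappa>))
    + 4 * (2 * \<kappa>) powr p * \<eta> / p"
  define eN where "eN = 4 * L powr p * \<eta> / p"
  define near where "near i \<longleftrightarrow> (\<exists>s\<in>S. \<bar>a i - s\<bar> \<le> \<rho> + 2*\<eta>)" for i
  define Lc where "Lc = 2 * C_const p / p * ((1 + \<epsilon>) / (1 - \<epsilon>)) powr (p + 1)"
  define Ju where "Ju i = (\<integral>\<^sup>+x. ennreal (\<bar>u' x\<bar> powr p) * indicator (cell i) x \<partial>lborel)" for i
  have Cp: "C_const p > 0" by (rule C_const_pos[OF p])
  have e: "e \<ge> 0" and eN: "eN \<ge> 0" using Cp p_pos d kap eta by (auto simp: e_def eN_def)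
  have split: "(\<integral>\<^sup>+x. f x \<partial>lborel) = (\<Sum>i<n. \<integral>\<^sup>+x. f x * indicator (cell i) x \<partial>lborel)
      + (\<integral>\<^sup>+x. f x * indicator (- Cov) x \<partial>lborel)" if "f \<in> borel_measurable borel" for f
    unfolding cell_def a_def Cov_def by (rule nn_integral_split_grid_cells[OF that eta(1)])
  have "Lambda \<delta> p (S_floor \<delta> u) = (\<integral>\<^sup>+x. J x \<partial>lborel)"
    unfolding J_def by (rule Lambda_eq_nn_integral_jump_integral) simp
  also have "\<dots> = (\<Sum>i<n. \<integral>\<^sup>+x. J x * indicator (cell i) x \<partial>lborel) + (\<integral>\<^sup>+x. J x * indicator (- Cov) x \<partial>lborel)"
    by (rule split) (simp add: J_def)
  also have "\<dots> \<le> (\<Sum>i<n. ennreal (e + (if near i then eN else 0)) + ennreal Lc * Ju i) + ennreal (4 * R * \<delta> powr p / p)"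
  proof (intro add_mono sum_mono)
    fix i assume "i \<in> {..<n}"
    then have "real i + 1 \<le> real n" by simp
    then have "(real i + 1) * \<eta> \<le> real n * \<eta>" using eta by (intro mult_right_mono) auto
    then have "-R-1 \<le> a i" "a i + \<eta> \<le> R + 2" using eta n by (auto simp: a_def A0_def algebra_simps)
    from nn_integral_jump_integral_grid_cell_le[OF eta rho kap eps d this osc]
    show "(\<integral>\<^sup>+x. J x * indicator (cell i) x \<partial>lborel) \<le> ennreal (e + (if near i then eN else 0)) + ennreal Lc * Ju i"
      unfolding J_def cell_def e_def eN_def near_def Lc_def Ju_def .
  next
    have "(\<integral>\<^sup>+x. J x * indicator (- Cov) x \<partial>lborel)
        \<le> (\<integral>\<^sup>+x. J x * indicator (- {-R-1<..<R+1}) x \<partial>lborel)"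
      using n by (intro nn_integral_mono mult_left_mono) (auto simp: Cov_def A0_def split: split_indicator)
    also have "\<dots> \<le> ennreal (4 * R * \<delta> powr p / p)"
      unfolding J_def by (rule nn_integral_jump_integral_outside_support_le[OF d])
    finally show "(\<integral>\<^sup>+x. J x * indicator (- Cov) x \<partial>lborel) \<le> ennreal (4 * R * \<delta> powr p / p)" .
  qed
  also have "\<dots> = ennreal (4 * R * \<delta> powr p / p + real n * e + real (card {i\<in>{..<n}. near i}) * eN)
      + ennreal Lc * (\<Sum>i<n. Ju i)"
  proof -
    have "(\<Sum>i<n. ennreal (e + (if near i then eN else 0))) = ennreal (\<Sum>i<n. e + (if near i then eN else 0))"
      using e eN by (intro sum_ennreal) auto
    also have "(\<Sum>i<n. e + (if near i then eN else 0)) = real n * e + real (card {i\<in>{..<n}. near i}) * eN"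
      by (simp add: sum.distrib sum.inter_filter[symmetric])
    finally have "(\<Sum>i<n. ennreal (e + (if near i then eN else 0)) + ennreal Lc * Ju i) + ennreal (4 * R * \<delta> powr p / p)
        = ennreal (real n * e + real (card {i\<in>{..<n}. near i}) * eN) + ennreal Lc * (\<Sum>i<n. Ju i)
          + ennreal (4 * R * \<delta> powr p / p)"
      by (simp only: sum.distrib sum_distrib_left[symmetric])
    then show ?thesis
      using e eN R d p_pos by (simp add: add_ac)
  qed
  also have "\<dots> \<le> ennreal (4 * R * \<delta> powr p / p + real n * e + real (card S) * (2 * (\<rho> + 2*\<eta>) / \<eta> + 1) * eN)
      + ennreal Lc * (\<integral>\<^sup>+x. ennreal (\<bar>u' x\<bar> powr p) \<partial>lborel)"
  proof (rule add_mono)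
    have "real (card {i\<in>{..<n}. near i}) \<le> real (card S) * (2 * (\<rho> + 2*\<eta>) / \<eta> + 1)"
      unfolding near_def a_def using rho eta by (intro card_grid_points_near_finite_le[OF finite_S]) auto
    then show "ennreal (4 * R * \<delta> powr p / p + real n * e + real (card {i\<in>{..<n}. near i}) * eN)
      \<le> ennreal (4 * R * \<delta> powr p / p + real n * e + real (card S) * (2 * (\<rho> + 2*\<eta>) / \<eta> + 1) * eN)"
      using eN by (intro ennreal_leI add_left_mono mult_right_mono) auto
    have "(\<integral>\<^sup>+x. ennreal (\<bar>u' x\<bar> powr p) \<partial>lborel)
        = (\<Sum>i<n. Ju i) + (\<integral>\<^sup>+x. ennreal (\<bar>u' x\<bar> powr p) * indicator (- Cov) x \<partial>lborel)"
      unfolding Ju_def by (rule split) simp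
    then have "(\<Sum>i<n. Ju i) \<le> (\<integral>\<^sup>+x. ennreal (\<bar>u' x\<bar> powr p) \<partial>lborel)"
      using le_iff_add by blast
    then show "ennreal Lc * (\<Sum>i<n. Ju i) \<le> ennreal Lc * (\<integral>\<^sup>+x. ennreal (\<bar>u' x\<bar> powr p) \<partial>lborel)"
      by (rule mult_left_mono) simp
  qed
  finally show ?thesis
    unfolding e_def eN_def Lc_def .
qed


lemma exists_admissible_grid:
  assumes e: "e > 0" and tol: "\<tau> > 0"
  obtains \<eta> \<rho> \<kappa> n where "0 < \<eta>" "\<eta> \<le> 1" "\<rho> > 0" "\<kappa> > 0"
    "R + 1 < -R-1 + real n * \<eta>" "-R-1 + real n * \<eta> \<le> R + 2"
    "\<And>t t'. \<bar>t\<bar> \<le> R+3 \<Longrightarrow> (\<forall>s\<in>S. \<rho> < \<bar>t - s\<bar>) \<Longrightarrow> \<bar>t'\<bar> \<le> R+3 \<Longrightarrow> (\<forall>s\<in>S. \<rho> < \<bar>t' - s\<bar>)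
       \<Longrightarrow> \<bar>t - t'\<bar> < 3*\<eta> \<Longrightarrow> \<bar>u' t - u' t'\<bar> \<le> \<tau>*\<kappa>"
    "real n * (4 * (2 * \<kappa>) powr p * \<eta> / p) + real (card S) * (2 * (\<rho> + 2*\<eta>) / \<eta> + 1) * (4 * L powr p * \<eta> / p) \<le> e"
proof -
  txt \<open>\<open>\<kappa>\<close> keeps the flat cells below \<open>e / 2\<close>, \<open>\<rho>\<close> and \<open>\<eta>\<close> do the same for the cells near
    \<open>S\<close>, and \<open>3 \<eta> \<le> dd\<close> yields the oscillation bound.\<close>
  define D where "D = L powr p * (real (card S) + 1)"
  have "L powr p \<ge> 1" using L p_pos by (simp add: ge_one_powr_ge_zero)
  then have D: "D \<ge> 1" using mult_mono[of 1 "L powr p" 1 "real (card S) + 1"] by (simp add: D_def)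
  define \<kappa> where "\<kappa> = min (1/2) (e * p / (16 * (2*R+3)))"
  have kap: "0 < \<kappa>" "2 * \<kappa> \<le> 1" "\<kappa> \<le> e * p / (16 * (2*R+3))"
    using e p_pos R by (auto simp: \<kappa>_def)
  define \<rho> where "\<rho> = e * p / (32 * D)"
  have rho: "\<rho> > 0" using e p_pos D by (simp add: \<rho>_def)
  have "\<tau> * \<kappa> > 0" using tol kap by simp
  then obtain dd where dd: "dd > 0" and uc: "\<And>t t'. \<bar>t\<bar> \<le> R+3 \<Longrightarrow> (\<forall>s\<in>S. \<rho> < \<bar>t - s\<bar>) \<Longrightarrow> \<bar>t'\<bar> \<le> R+3
      \<Longrightarrow> (\<forall>s\<in>S. \<rho> < \<bar>t' - s\<bar>) \<Longrightarrow> \<bar>t - t'\<bar> < dd \<Longrightarrow> \<bar>u' t - u' t'\<bar> \<le> \<tau>*\<kappa>"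
    using uniformly_continuous_on_off_finite[OF finite_S continuous_deriv rho, where M="R+3"] by blast
  define \<eta> where "\<eta> = min (1/2) (min (dd/3) (e * p / (80 * D)))"
  have eta: "0 < \<eta>" "\<eta> \<le> 1/2" "3 * \<eta> \<le> dd" "\<eta> \<le> e * p / (80 * D)"
    using dd e p_pos D by (auto simp: \<eta>_def)
  obtain n where cov: "R + 1 < -R-1 + real n * \<eta>" "-R-1 + real n * \<eta> \<le> R + 2"
    using exists_grid_size[OF less_imp_le[OF R] eta(1,2)] by blast
  have errS: "real (card S) * (2 * (\<rho> + 2*\<eta>) / \<eta> + 1) * (4 * L powr p * \<eta> / p) \<le> e/2"
  proof -
    have "real (card S) * (2 * (\<rho> + 2*\<eta>) / \<eta> + 1) * (4 * L powr p * \<eta> / p)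
        = real (card S) * (2 * \<rho> + 5 * \<eta>) * (4 * L powr p / p)"
      using eta p_pos by (simp add: field_simps)
    also have "\<dots> \<le> (real (card S) + 1) * (2 * \<rho> + 5 * \<eta>) * (4 * L powr p / p)"
      using rho eta p_pos by (intro mult_right_mono) auto
    also have "\<dots> = 8 * \<rho> * D / p + 20 * \<eta> * D / p"
      by (simp add: D_def add_divide_distrib[symmetric] algebra_simps)
    also have "\<dots> \<le> e/2"
    proof -
      have A: "8 * \<rho> * D / p \<le> e/4" using D p_pos by (simp add: \<rho>_def field_simps)
      have "20 * \<eta> * D \<le> 20 * (e * p / (80 * D)) * D"
        using eta(4) D by (intro mult_right_mono mult_left_mono) auto
      then have B: "20 * \<eta> * D / p \<le> e/4" using D p_pos by (simp add: field_simps)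
      from add_mono[OF A B] show ?thesis by simp
    qed
    finally show ?thesis .
  qed
  have errK: "real n * (4 * (2 * \<kappa>) powr p * \<eta> / p) \<le> e/2"
  proof -
    have "(2 * \<kappa>) powr p \<le> 2 * \<kappa>" using kap p by (intro powr_le_one_le) auto
    then have "real n * (4 * (2 * \<kappa>) powr p * \<eta> / p) \<le> real n * (4 * (2 * \<kappa>) * \<eta> / p)"
      using eta p_pos by (intro mult_left_mono divide_right_mono mult_right_mono) auto
    also have "\<dots> = (real n * \<eta>) * (8 * \<kappa> / p)" by simp
    also have "\<dots> \<le> (2*R+3) * (8 * (e * p / (16 * (2*R+3))) / p)"
      using cov(2) kap p_pos R by (intro mult_mono divide_right_mono) auto
    also have "\<dots> = e/2"
    proof -
      have gen: "Q * (8 * (e * p / (16 * Q)) / p) = e/2" if "Q > 0" for Q using that p_pos by (simp add: field_simps)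
      show ?thesis by (rule gen) (use R in simp)
    qed
    finally show ?thesis .
  qed
  show ?thesis
  proof (rule that[OF eta(1) _ rho kap(1) cov(1,2)])
    show "\<eta> \<le> 1" using eta by simp
    show "\<bar>u' t - u' t'\<bar> \<le> \<tau>*\<kappa>" if "\<bar>t\<bar> \<le> R+3" "\<forall>s\<in>S. \<rho> < \<bar>t - s\<bar>" "\<bar>t'\<bar> \<le> R+3"
      "\<forall>s\<in>S. \<rho> < \<bar>t' - s\<bar>" "\<bar>t - t'\<bar> < 3*\<eta>" for t t'
      using uc[OF that(1-4)] that(5) eta by linarith
  qed (use errS errK in linarith)
qed


lemma eventually_Lambda_S_floor_le:
  assumes e: "e > 0" and J: "(\<integral>\<^sup>+x. ennreal (\<bar>u' x\<bar> powr p) \<partial>lborel) = ennreal Jr" and Jr: "Jr \<ge> 0"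
  shows "\<forall>\<^sub>F \<delta> in at_right 0. Lambda \<delta> p (S_floor \<delta> u) \<le> ennreal (2 / p * C_const p) * ennreal Jr + ennreal e"
proof -
  define K where "K = 2 * C_const p / p"
  have K: "K > 0" using C_const_pos[OF p] p_pos by (simp add: K_def)
  obtain \<epsilon> where eps: "0 < \<epsilon>" "\<epsilon> \<le> 1/2" and epsJ: "K * ((1 + \<epsilon>) / (1 - \<epsilon>)) powr (p + 1) * Jr \<le> K * Jr + e/3"
    using exists_slope_tolerance[of "e/3" K p Jr] e by auto
  have "e/3 > 0" using e by simp
  obtain \<eta> \<rho> \<kappa> n where eta: "0 < \<eta>" "\<eta> \<le> 1" and rho: "\<rho> > 0" and kap: "\<kappa> > 0"
    and n: "R + 1 < -R-1 + real n * \<eta>" "-R-1 + real n * \<eta> \<le> R + 2"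
    and osc: "\<And>t t'. \<bar>t\<bar> \<le> R+3 \<Longrightarrow> (\<forall>s\<in>S. \<rho> < \<bar>t - s\<bar>) \<Longrightarrow> \<bar>t'\<bar> \<le> R+3 \<Longrightarrow> (\<forall>s\<in>S. \<rho> < \<bar>t' - s\<bar>)
       \<Longrightarrow> \<bar>t - t'\<bar> < 3*\<eta> \<Longrightarrow> \<bar>u' t - u' t'\<bar> \<le> \<epsilon>*\<kappa>"
    and err: "real n * (4 * (2 * \<kappa>) powr p * \<eta> / p)
      + real (card S) * (2 * (\<rho> + 2*\<eta>) / \<eta> + 1) * (4 * L powr p * \<eta> / p) \<le> e/3"
    by (rule exists_admissible_grid[OF \<open>e/3 > 0\<close> eps(1)]) (rule that)
  define T where "T \<delta> = 4 * R * \<delta> powr p / p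
    + real n * (4 * \<delta> powr p * \<eta> powr (1-p) / p + 2 * C_const p / p * ((2 * L) powr p * (4 * \<delta> / \<kappa>)))" for \<delta>
  have "\<forall>\<^sub>F \<delta> in at_right (0::real). 0 < \<delta>" by (simp add: eventually_at_right_less)
  then have "(T \<longlongrightarrow> T 0) (at_right 0)"
    unfolding T_def using p_pos kap by (intro tendsto_intros) (auto elim: eventually_mono)
  moreover have "T 0 = 0" using p_pos by (simp add: T_def)
  ultimately have "\<forall>\<^sub>F \<delta> in at_right 0. T \<delta> < e/3" using e by (intro order_tendstoD) auto
  moreover note \<open>\<forall>\<^sub>F \<delta> in at_right (0::real). 0 < \<delta>\<close>
  ultimately show ?thesis
  proof eventually_elim
    case (elim \<delta>)
    have split: "4 * R * \<delta> powr p / p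
        + real n * (4 * \<delta> powr p * \<eta> powr (1-p) / p + 2 * C_const p / p * ((2 * L) powr p * (4 * \<delta> / \<kappa>))
          + 4 * (2 * \<kappa>) powr p * \<eta> / p)
        + real (card S) * (2 * (\<rho> + 2*\<eta>) / \<eta> + 1) * (4 * L powr p * \<eta> / p)
      = T \<delta> + (real n * (4 * (2 * \<kappa>) powr p * \<eta> / p)
          + real (card S) * (2 * (\<rho> + 2*\<eta>) / \<eta> + 1) * (4 * L powr p * \<eta> / p))"
      by (simp add: T_def distrib_left add_ac)
    have "Lambda \<delta> p (S_floor \<delta> u)
      \<le> ennreal (T \<delta> + (real n * (4 * (2 * \<kappa>) powr p * \<eta> / p)
          + real (card S) * (2 * (\<rho> + 2*\<eta>) / \<eta> + 1) * (4 * L powr p * \<eta> / p)))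
        + ennreal (K * ((1 + \<epsilon>) / (1 - \<epsilon>)) powr (p + 1)) * ennreal Jr"
      using Lambda_S_floor_le_grid_sum[OF eta rho kap eps elim(2) n osc] unfolding split J K_def .
    also have "\<dots> \<le> ennreal (2 * e / 3) + ennreal (K * Jr + e / 3)"
    proof (rule add_mono)
      show "ennreal (T \<delta> + (real n * (4 * (2 * \<kappa>) powr p * \<eta> / p)
          + real (card S) * (2 * (\<rho> + 2*\<eta>) / \<eta> + 1) * (4 * L powr p * \<eta> / p))) \<le> ennreal (2 * e / 3)"
        using elim(1) err by (intro ennreal_leI) simp
      have "ennreal (K * ((1 + \<epsilon>) / (1 - \<epsilon>)) powr (p + 1)) * ennreal Jr
          = ennreal (K * ((1 + \<epsilon>) / (1 - \<epsilon>)) powr (p + 1) * Jr)"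
        by (rule ennreal_mult'[symmetric]) (use K in simp)
      then show "ennreal (K * ((1 + \<epsilon>) / (1 - \<epsilon>)) powr (p + 1)) * ennreal Jr \<le> ennreal (K * Jr + e / 3)"
        using epsJ by (simp add: ennreal_leI)
    qed
    also have "\<dots> = ennreal (K * Jr + e)"
      using K Jr e by (subst ennreal_plus[symmetric]) auto
    also have "\<dots> = ennreal (K * Jr) + ennreal e"
      using K Jr e by (intro ennreal_plus) auto
    also have "\<dots> = ennreal (2 / p * C_const p) * ennreal Jr + ennreal e"
      using K by (simp add: K_def ennreal_mult'[symmetric])
    finally show ?case .
  qed
qed

lemma Limsup_Lambda_S_floor_le:
  "Limsup (at_right 0) (\<lambda>\<delta>. Lambda \<delta> p (S_floor \<delta> u))
    \<le> ennreal (2 / p * C_const p) * (\<integral>\<^sup>+x. ennreal (\<bar>u' x\<bar> powr p) \<partial>lborel)"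
proof (rule ennreal_le_epsilon)
  fix e :: real
  assume top: "ennreal (2 / p * C_const p) * (\<integral>\<^sup>+x. ennreal (\<bar>u' x\<bar> powr p) \<partial>lborel) < top" and e: "0 < e"
  then have "(\<integral>\<^sup>+x. ennreal (\<bar>u' x\<bar> powr p) \<partial>lborel) < top"
    using C_const_pos[OF p] p_pos by (auto simp: ennreal_mult_less_top)
  then obtain Jr where J: "(\<integral>\<^sup>+x. ennreal (\<bar>u' x\<bar> powr p) \<partial>lborel) = ennreal Jr" and Jr: "Jr \<ge> 0"
    by (cases "\<integral>\<^sup>+x. ennreal (\<bar>u' x\<bar> powr p) \<partial>lborel") auto
  show "Limsup (at_right 0) (\<lambda>\<delta>. Lambda \<delta> p (S_floor \<delta> u))
    \<le> ennreal (2 / p * C_const p) * (\<integral>\<^sup>+x. ennreal (\<bar>u' x\<bar> powr p) \<partial>lborel) + ennreal e"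
    unfolding J by (rule Limsup_bounded[OF eventually_Lambda_S_floor_le[OF e J Jr]])
qed

end

theorem proposition3p7:
  fixes p :: real and u u' :: "real \<Rightarrow> real" and S :: "real set"
  assumes "p \<ge> 1"
    and "compact (closure {x. u x \<noteq> 0})"
    and "\<exists>L. L-lipschitz_on UNIV u"
    and "finite S"
    and "\<And>x. x \<notin> S \<Longrightarrow> (u has_real_derivative u' x) (at x)"
    and "continuous_on (- S) u'"
  shows "Limsup (at_right 0) (\<lambda>\<delta>. Lambda \<delta> p (S_floor \<delta> u))
           \<le> ennreal (2 / p * C_const p) * (\<integral>\<^sup>+ x. ennreal (\<bar>u' x\<bar> powr p) \<partial>lborel)"
proof -
  obtain L where L: "L-lipschitz_on UNIV u" using assms(3) by blast
  have "bounded (closure {x. u x \<noteq> 0})" using assms(2) by (rule compact_imp_bounded)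
  then obtain B where B: "\<forall>x\<in>closure {x. u x \<noteq> 0}. norm x \<le> B"
    unfolding bounded_iff by blast
  interpret compact_piecewise_C1 u u' S p "max L 1" "max B 1"
  proof
    show "continuous_on UNIV u" by (rule lipschitz_on_continuous_on[OF L])
    show "\<bar>u' x\<bar> \<le> max L 1" if "x \<notin> S" for x
      using abs_deriv_le_of_lipschitz[OF L assms(5)[OF that]] by simp
    show "\<bar>x\<bar> \<le> max B 1" if "u x \<noteq> 0" for x
    proof -
      have "x \<in> closure {x. u x \<noteq> 0}" by (rule closure_subset[THEN subsetD]) (simp add: that)
      then show ?thesis using B by force
    qed
    show "(u has_real_derivative u' x) (at x)" if "x \<notin> S" for x using assms(5) that .
  qed (simp_all add: assms(1,4,6))
  show ?thesis by (rule Limsup_Lambda_S_floor_le)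
qed
end
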